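(* Let $Q$ be a non-empty quasi-order. The map $g: i^F_{\omega^\omega}(Q)\to\mathsf{T_f}(Q)$ is well-defined and is an order-embedding: for all $\sigma,\tau\in i^F_{\omega^\omega}(Q)$, $\sigma\preceq\tau$ iff $g(\sigma)\le_T g(\tau)$. Well-definedness means that for every $\sigma$ of length $\omega^n$ with $0<n<\omega$, the set $\mathrm{factors}(\sigma)$ is finite modulo $\preceq$-equivalence.
   Context: Sequences: a transfinite sequence over $Q$ of length $\alpha$ (with $\alpha\ne0$) is a function $\sigma:\alpha\to Q$, and $|\sigma|=\alpha$. Define $\sigma\preceq\tau$ if there is a strictly increasing $f:|\sigma|\to|\tau|$ with $\sigma(i)\le_Q\tau(f(i))$ for all $i$. Finite range means finitely many values; $\mathrm{range}(\sigma)$ is the set of values, with the induced order. A proper tail of $\sigma$ is $i\mapsto\sigma(\delta+i)$ for some $0<\delta<|\sigma|$. The sequence $\sigma$ is indecomposable if it embeds into each of its proper tails. $\tau^\omega$ denotes the concatenation of $\omega$ copies of $\tau$. $i^F_\alpha(P)$ is the set of indecomposable finite-range sequences over $P$ of length $<\alpha$. Indecomposable sequences in $i^F_{\omega^\omega}(Q)$ have length $\omega^n$ for some $n<\omega$. Cofinal factors: for indecomposable $\sigma$, $\mathrm{factors}(\sigma)=\{\tau\in i^F_{|\sigma|}(\mathrm{range}(\sigma)) : \tau^\omega\preceq\sigma\}$. Trees: $\mathsf{T_f}(Q)$ is the smallest class containing the leaf $\cdot q$ for each $q\in Q$, and containing $\cdot(\tau_0,\dots,\tau_{k-1})$ (an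 unlabelled root whose children are the $\tau_i$) for every finite set $\{\tau_0,\dots,\tau_{k-1}\}\subseteq\mathsf{T_f}(Q)$ with $k\ge1$. Its order $\le_T$ is defined recursively: - $\cdot x\le_T\cdot y$ iff $x\le_Q y$; - $\cdot x\le_T\cdot(\tau_j)_{j<l}$ iff $\cdot x\le_T\tau_j$ for some $j$; - $\cdot(\sigma_i)_{i<k}\le_T\cdot(\tau_j)_{j<l}$ iff every $\sigma_i$ is $\le_T$ some $\tau_j$; - a non-leaf tree is never $\le_T$ a leaf. The map $g$ is defined by recursion on length: - $g(\langle q\rangle)=\cdot q$ for a length-one sequence $\langle q\rangle$; - if $|\sigma|=\omega^n$ with $0<n<\omega$ and $\mathrm{factors}(\sigma)$ is, up to $\preceq$-equivalence, a finite set with representatives $\sigma_0,\dots,\sigma_{k-1}$, then $g(\sigma)=\cdot(g(\sigma_0),\dots,g(\sigma_{k-1}))$. *)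

theory Defs
  imports Main "HOL-Library.FSet"
begin

text \<open>An ordinal below omega^omega is represented by the list of its Cantor normal
 form coefficients, most significant first: [c_m, ..., c_0] stands for
 omega^m * c_m + ... + omega^0 * c_0, normalised so that the leading coefficient is
 nonzero (the empty list is 0).\<close>

type_synonym ord = "nat list"

definition is_ord :: "ord \<Rightarrow> bool" where
  "is_ord xs \<longleftrightarrow> xs = [] \<or> hd xs \<noteq> 0"

text \<open>Ordinal order: on normalised lists it is the length-lexicographic order.\<close>
definition olt :: "ord \<Rightarrow> ord \<Rightarrow> bool" where
  "olt a b \<longleftrightarrow> (a, b) \<in> lenlex less_than"

definition omega_pow :: "nat \<Rightarrow> ord" where
  "omega_pow n = 1 # replicate n 0"

definition oadd :: "ord \<Rightarrow> ord \<Rightarrow> ord" where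
  "oadd d i = (if i = [] then d
     else if length d < length i then i
     else take (length d - length i) d @ [d ! (length d - length i) + hd i] @ tl i)"

definition omul_nat :: "ord \<Rightarrow> nat \<Rightarrow> ord" where
  "omul_nat a k = (if k = 0 \<or> a = [] then [] else (hd a * k) # tl a)"

definition odom :: "ord \<Rightarrow> ord set" where
  "odom a = {b. is_ord b \<and> olt b a}"

text \<open>A transfinite sequence is a pair (length, values); only the values on
 odom (length) matter.\<close>
type_synonym 'q tseq = "ord \<times> (ord \<Rightarrow> 'q)"

definition seq_len :: "'q tseq \<Rightarrow> ord" where
  "seq_len s = fst s"

definition seq_at :: "'q tseq \<Rightarrow> ord \<Rightarrow> 'q" where
  "seq_at s i = snd s i"

definition valid_seq :: "'q tseq \<Rightarrow> bool" where
  "valid_seq s \<longleftrightarrow> is_ord (seq_len s) \<and> seq_len s \<noteq> []"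

definition seq_range :: "'q tseq \<Rightarrow> 'q set" where
  "seq_range s = seq_at s ` odom (seq_len s)"

definition emb :: "('q::preorder) tseq \<Rightarrow> 'q tseq \<Rightarrow> bool" where
  "emb s t \<longleftrightarrow> (\<exists>f.
     (\<forall>i\<in>odom (seq_len s). f i \<in> odom (seq_len t) \<and> seq_at s i \<le> seq_at t (f i)) \<and>
     (\<forall>i\<in>odom (seq_len s). \<forall>j\<in>odom (seq_len s). olt i j \<longrightarrow> olt (f i) (f j)))"

definition seq_equiv :: "('q::preorder) tseq \<Rightarrow> 'q tseq \<Rightarrow> bool" where
  "seq_equiv s t \<longleftrightarrow> emb s t \<and> emb t s"

definition seq_tail :: "'q tseq \<Rightarrow> ord \<Rightarrow> 'q tseq" where
  "seq_tail s d = ((THE g. is_ord g \<and> oadd d g = seq_len s), (\<lambda>i. seq_at s (oadd d i)))"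

definition indecomposable :: "('q::preorder) tseq \<Rightarrow> bool" where
  "indecomposable s \<longleftrightarrow>
     (\<forall>d. is_ord d \<and> d \<noteq> [] \<and> olt d (seq_len s) \<longrightarrow> emb s (seq_tail s d))"

definition omega_concat :: "'q tseq \<Rightarrow> 'q tseq" where
  "omega_concat t = (omega_pow (length (seq_len t)),
     (\<lambda>b. seq_at t (THE r. is_ord r \<and> olt r (seq_len t) \<and>
                      (\<exists>k. b = oadd (omul_nat (seq_len t) k) r))))"

definition iF :: "('q::preorder) set \<Rightarrow> ord \<Rightarrow> 'q tseq set" where
  "iF P a = {s. valid_seq s \<and> olt (seq_len s) a \<and> finite (seq_range s) \<and>
                seq_range s \<subseteq> P \<and> indecomposable s}"

text \<open>i^F_{omega^omega}(Q), Q the whole (preordered) type: every valid sequence has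
 length below omega^omega.\<close>
definition iF_ww :: "('q::preorder) tseq set" where
  "iF_ww = {s. valid_seq s \<and> finite (seq_range s) \<and> indecomposable s}"

definition factors :: "('q::preorder) tseq \<Rightarrow> 'q tseq set" where
  "factors s = {t \<in> iF (seq_range s) (seq_len s). emb (omega_concat t) s}"

definition finite_mod_equiv :: "('q::preorder) tseq set \<Rightarrow> bool" where
  "finite_mod_equiv A \<longleftrightarrow> (\<exists>F. finite F \<and> F \<subseteq> A \<and> (\<forall>t\<in>A. \<exists>r\<in>F. seq_equiv t r))"

datatype 'q ftree = Leaf 'q | Node "'q ftree fset"

inductive tree_wf :: "'q ftree \<Rightarrow> bool" where
  "tree_wf (Leaf x)"
| "ts \<noteq> {||} \<Longrightarrow> (\<forall>t. t |\<in>| ts \<longrightarrow> tree_wf t) \<Longrightarrow> tree_wf (Node ts)"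

inductive le_T :: "('q::preorder) ftree \<Rightarrow> 'q ftree \<Rightarrow> bool" where
  leaf_leaf: "x \<le> y \<Longrightarrow> le_T (Leaf x) (Leaf y)"
| leaf_node: "t |\<in>| ts \<Longrightarrow> le_T (Leaf x) t \<Longrightarrow> le_T (Leaf x) (Node ts)"
| node_node: "(\<forall>s. s |\<in>| ss \<longrightarrow> (\<exists>t. t |\<in>| ts \<and> le_T s t)) \<Longrightarrow> le_T (Node ss) (Node ts)"

section \<open>The map g, as a relation (the tree depends on the chosen representatives)\<close>

inductive is_g :: "('q::preorder) tseq \<Rightarrow> 'q ftree \<Rightarrow> bool" where
  g_one: "seq_len s = omega_pow 0 \<Longrightarrow> is_g s (Leaf (seq_at s []))"
| g_pow: "seq_len s = omega_pow n \<Longrightarrow> 0 < n \<Longrightarrow>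
     fset F \<subseteq> factors s \<Longrightarrow>
     (\<forall>t\<in>factors s. \<exists>r. r |\<in>| F \<and> seq_equiv t r) \<Longrightarrow>
     (\<forall>r r'. r |\<in>| F \<longrightarrow> r' |\<in>| F \<longrightarrow> seq_equiv r r' \<longrightarrow> r = r') \<Longrightarrow>
     (\<forall>r. r |\<in>| F \<longrightarrow> is_g r (h r)) \<Longrightarrow>
     is_g s (Node (h |`| F))"

end

theory Submission
  imports Defs "HOL-Library.List_Lexorder" "HOL-Library.Infinite_Set"
begin

text \<open>Positions below omega^n are coded by digit lists of length n, ordered
  lexicographically, so that a sequence of length omega^n becomes a labelled set of digit lists,
  and a tree whose children are \<open>\<tau>\<^sub>0, \<dots>, \<tau>\<^sub>k\<^sub>-\<^sub>1\<close> becomes the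
  omega-power of their concatenation. Under this coding the tree order is exactly embeddability.

  By induction on n, every sequence of length omega^n with finite range is covered by finitely
  many indecomposable pieces of length at most omega^n, and every indecomposable one is equivalent
  to the tree whose children are the trees \<open>\<tau>\<close> of height below n with
  \<open>\<tau>\<^sup>\<omega>\<close> below it; over a finite range there are only finitely many such trees. Hence the
  factors of \<open>\<sigma>\<close> fall into finitely many equivalence classes, g is defined, and
  \<open>g(\<sigma>)\<close> is equivalent to \<open>\<sigma>\<close>, which makes g an order embedding.\<close>

section \<open>Labelled sets of digit lists\<close>

text \<open>A labelled set stands for the sequence indexed by its positions in lexicographic
  order.\<close>

type_synonym 'q lset = "nat list set \<times> (nat list \<Rightarrow> 'q)"

definition embedding :: "(nat list \<Rightarrow> nat list) \<Rightarrow> ('q::preorder) lset \<Rightarrow> 'q lset \<Rightarrow> bool" where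
  "embedding f X Y \<longleftrightarrow> (\<forall>i\<in>fst X. f i \<in> fst Y \<and> snd X i \<le> snd Y (f i)) \<and>
     (\<forall>i\<in>fst X. \<forall>j\<in>fst X. i < j \<longrightarrow> f i < f j)"

definition embeds :: "('q::preorder) lset \<Rightarrow> 'q lset \<Rightarrow> bool" where
  "embeds X Y \<longleftrightarrow> (\<exists>f. embedding f X Y)"

abbreviation lequiv :: "('q::preorder) lset \<Rightarrow> 'q lset \<Rightarrow> bool" where
  "lequiv X Y \<equiv> embeds X Y \<and> embeds Y X"

lemma embeddingI:
  assumes "\<And>i. i \<in> fst X \<Longrightarrow> f i \<in> fst Y"
    and "\<And>i. i \<in> fst X \<Longrightarrow> snd X i \<le> snd Y (f i)"
    and "\<And>i j. i \<in> fst X \<Longrightarrow> j \<in> fst X \<Longrightarrow> i < j \<Longrightarrow> f i < f j"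
  shows "embedding f X Y"
  using assms unfolding embedding_def by blast

lemma embeddingD:
  assumes "embedding f X Y"
  shows "i \<in> fst X \<Longrightarrow> f i \<in> fst Y"
    and "i \<in> fst X \<Longrightarrow> snd X i \<le> snd Y (f i)"
    and "i \<in> fst X \<Longrightarrow> j \<in> fst X \<Longrightarrow> i < j \<Longrightarrow> f i < f j"
  using assms unfolding embedding_def by blast+

lemma embedding_le:
  "embedding f X Y \<Longrightarrow> i \<in> fst X \<Longrightarrow> j \<in> fst X \<Longrightarrow> i \<le> j \<Longrightarrow> f i \<le> f j"
  using embeddingD(3) by (fastforce simp: le_less)

lemma embedding_inj:
  "embedding f X Y \<Longrightarrow> i \<in> fst X \<Longrightarrow> j \<in> fst X \<Longrightarrow> f i = f j \<Longrightarrow> i = j"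
  using embeddingD(3) by (metis less_irrefl neqE)

lemma embedding_comp: "embedding f X Y \<Longrightarrow> embedding g Y Z \<Longrightarrow> embedding (g \<circ> f) X Z"
  unfolding embedding_def by (auto intro: order_trans)

lemma embeds_trans: "embeds X Y \<Longrightarrow> embeds Y Z \<Longrightarrow> embeds X Z"
  unfolding embeds_def using embedding_comp by blast

lemma embeds_subset:
  "fst X \<subseteq> fst Y \<Longrightarrow> (\<And>i. i \<in> fst X \<Longrightarrow> snd X i \<le> snd Y i) \<Longrightarrow> embeds X Y"
  unfolding embeds_def embedding_def by (metis id_apply subsetD)

lemma embeds_refl: "embeds X X"
  by (rule embeds_subset) auto

lemma embeds_empty: "fst X = {} \<Longrightarrow> embeds X Y"
  unfolding embeds_def embedding_def by auto

lemma embeds_nonempty: "embeds X Y \<Longrightarrow> fst X \<noteq> {} \<Longrightarrow> fst Y \<noteq> {}"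
  unfolding embeds_def embedding_def by blast

text \<open>Ordinal sum of an omega-sequence, concatenation of a finite list and omega-power:
  the positions of a summand are prefixed by its index.\<close>

definition lsum :: "(nat \<Rightarrow> 'q lset) \<Rightarrow> 'q lset" where
  "lsum X = ({xs. xs \<noteq> [] \<and> tl xs \<in> fst (X (hd xs))}, \<lambda>xs. snd (X (hd xs)) (tl xs))"

definition lconcat :: "'q lset list \<Rightarrow> 'q lset" where
  "lconcat L = ({xs. xs \<noteq> [] \<and> hd xs < length L \<and> tl xs \<in> fst (L ! hd xs)},
     \<lambda>xs. snd (L ! hd xs) (tl xs))"

definition lomega :: "'q lset \<Rightarrow> 'q lset" where
  "lomega X = lsum (\<lambda>_. X)"

definition omega_seq :: "nat \<Rightarrow> (nat list \<Rightarrow> 'q) \<Rightarrow> 'q lset" where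
  "omega_seq n l = ({xs. length xs = n}, l)"

definition ltail :: "'q lset \<Rightarrow> nat list \<Rightarrow> 'q lset" where
  "ltail X d = ({x\<in>fst X. d \<le> x}, snd X)"

definition lindec :: "('q::preorder) lset \<Rightarrow> bool" where
  "lindec X \<longleftrightarrow> (\<forall>d\<in>fst X. embeds X (ltail X d))"

lemma mem_lsum: "xs \<in> fst (lsum X) \<longleftrightarrow> (\<exists>p a. xs = p # a \<and> a \<in> fst (X p))"
  by (cases xs) (auto simp: lsum_def)

lemma Cons_mem_lsum [simp]: "p # a \<in> fst (lsum X) \<longleftrightarrow> a \<in> fst (X p)"
  by (auto simp: lsum_def)

lemma snd_lsum [simp]: "snd (lsum X) (p # a) = snd (X p) a"
  by (simp add: lsum_def)

lemma mem_lconcat: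
  "xs \<in> fst (lconcat L) \<longleftrightarrow> (\<exists>i a. xs = i # a \<and> i < length L \<and> a \<in> fst (L ! i))"
  by (cases xs) (auto simp: lconcat_def)

lemma Cons_mem_lconcat [simp]: "i # a \<in> fst (lconcat L) \<longleftrightarrow> i < length L \<and> a \<in> fst (L ! i)"
  by (auto simp: lconcat_def)

lemma snd_lconcat [simp]: "snd (lconcat L) (i # a) = snd (L ! i) a"
  by (simp add: lconcat_def)

lemma lconcat_Nil: "fst (lconcat []) = {}"
  by (simp add: lconcat_def)

lemma mem_lomega: "xs \<in> fst (lomega X) \<longleftrightarrow> (\<exists>c a. xs = c # a \<and> a \<in> fst X)"
  by (simp add: lomega_def mem_lsum)

lemma Cons_mem_lomega [simp]: "c # a \<in> fst (lomega X) \<longleftrightarrow> a \<in> fst X"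
  by (simp add: lomega_def)

lemma snd_lomega [simp]: "snd (lomega X) (c # a) = snd X a"
  by (simp add: lomega_def)

lemma fst_omega_seq [simp]: "fst (omega_seq n l) = {xs. length xs = n}"
  by (simp add: omega_seq_def)

lemma snd_omega_seq [simp]: "snd (omega_seq n l) = l"
  by (simp add: omega_seq_def)

lemma omega_seq_nonempty: "fst (omega_seq n l) \<noteq> {}"
  by (simp add: ex_in_conv[symmetric]) (metis length_replicate)

lemma fst_ltail [simp]: "fst (ltail X d) = {x\<in>fst X. d \<le> x}"
  by (simp add: ltail_def)

lemma snd_ltail [simp]: "snd (ltail X d) = snd X"
  by (simp add: ltail_def)

lemma embeds_lomega_lconcat_Nil: "embeds X (lomega (lconcat L)) \<Longrightarrow> fst X \<noteq> {} \<Longrightarrow> L \<noteq> []"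
  using embeds_nonempty by (fastforce simp: mem_lomega lconcat_Nil)

lemma lomega_mono: "embeds X Y \<Longrightarrow> embeds (lomega X) (lomega Y)"
proof -
  assume "embeds X Y"
  then obtain f where f: "embedding f X Y" unfolding embeds_def by blast
  have "embedding (\<lambda>xs. hd xs # f (tl xs)) (lomega X) (lomega Y)"
    by (rule embeddingI) (auto simp: mem_lomega embeddingD[OF f])
  thus ?thesis unfolding embeds_def by blast
qed

lemma lindec_lomega: "lindec (lomega X)"
  unfolding lindec_def
proof
  fix d assume "d \<in> fst (lomega X)"
  then obtain c a where d: "d = c # a" by (auto simp: mem_lomega)
  have "embedding (\<lambda>xs. (Suc c + hd xs) # tl xs) (lomega X) (ltail (lomega X) d)"
    by (rule embeddingI) (auto simp: mem_lomega d le_less)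
  thus "embeds (lomega X) (ltail (lomega X) d)" unfolding embeds_def by blast
qed

lemma lindec_omega_seq_0: "lindec (omega_seq 0 l)"
  unfolding lindec_def by (auto intro!: embeds_subset)

lemma embeds_lconcat_member: "Y \<in> set L \<Longrightarrow> embeds Y (lconcat L)"
proof -
  assume "Y \<in> set L"
  then obtain i where i: "i < length L" "L ! i = Y" by (auto simp: in_set_conv_nth)
  have "embedding (\<lambda>a. i # a) Y (lconcat L)" by (rule embeddingI) (use i in auto)
  thus ?thesis unfolding embeds_def by blast
qed

lemma lconcat_singleton: "lequiv (lconcat [X]) X"
proof
  have "embedding tl (lconcat [X]) X" by (rule embeddingI) (auto simp: mem_lconcat)
  thus "embeds (lconcat [X]) X" unfolding embeds_def by blast
  show "embeds X (lconcat [X])" using embeds_lconcat_member[of X "[X]"] by simp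
qed

lemma lsum_mono:
  assumes "\<And>p. embeds (X p) (Y p)"
  shows "embeds (lsum X) (lsum Y)"
proof -
  obtain F where F: "\<And>p. embedding (F p) (X p) (Y p)" using assms unfolding embeds_def by metis
  have "embedding (\<lambda>xs. hd xs # F (hd xs) (tl xs)) (lsum X) (lsum Y)"
    by (rule embeddingI) (auto simp: mem_lsum embeddingD[OF F])
  thus ?thesis unfolding embeds_def by blast
qed

lemma lconcat_mono: "list_all2 embeds L L' \<Longrightarrow> embeds (lconcat L) (lconcat L')"
proof -
  assume "list_all2 embeds L L'"
  then have len: "length L = length L'" and "\<forall>i<length L. embeds (L ! i) (L' ! i)"
    by (simp_all add: list_all2_conv_all_nth)
  then obtain F where F: "\<And>i. i < length L \<Longrightarrow> embedding (F i) (L ! i) (L' ! i)"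
    unfolding embeds_def by metis
  have "embedding (\<lambda>xs. hd xs # F (hd xs) (tl xs)) (lconcat L) (lconcat L')"
  proof (rule embeddingI)
    fix xs ys assume "xs \<in> fst (lconcat L)" "ys \<in> fst (lconcat L)" "xs < ys"
    then show "hd xs # F (hd xs) (tl xs) < hd ys # F (hd ys) (tl ys)"
      using embeddingD(3)[OF F] by (auto simp: mem_lconcat)
  qed (use len embeddingD(1,2)[OF F] in \<open>auto simp: mem_lconcat\<close>)
  thus ?thesis unfolding embeds_def by blast
qed

lemma lconcat_append_embeds_pair: "embeds (lconcat (A @ B)) (lconcat [lconcat A, lconcat B])"
proof -
  have "embedding (\<lambda>xs. if hd xs < length A then 0 # xs else 1 # (hd xs - length A) # tl xs)
      (lconcat (A @ B)) (lconcat [lconcat A, lconcat B])"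
    by (rule embeddingI) (auto simp: mem_lconcat nth_append)
  thus ?thesis unfolding embeds_def by blast
qed

lemma lconcat_pair_embeds_append: "embeds (lconcat [lconcat A, lconcat B]) (lconcat (A @ B))"
proof -
  have "embedding (\<lambda>xs. if hd xs = 0 then tl xs else (length A + hd (tl xs)) # tl (tl xs))
      (lconcat [lconcat A, lconcat B]) (lconcat (A @ B))"
    by (rule embeddingI) (fastforce simp: mem_lconcat nth_append less_Suc_eq)+
  thus ?thesis unfolding embeds_def by blast
qed

lemma lconcat_append_embeds:
  assumes "embeds (lconcat A) (lconcat B)" "embeds (lconcat A') (lconcat B')"
  shows "embeds (lconcat (A @ A')) (lconcat (B @ B'))"
proof -
  have "embeds (lconcat [lconcat A, lconcat A']) (lconcat [lconcat B, lconcat B'])"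
    using assms by (intro lconcat_mono) simp
  thus ?thesis
    using embeds_trans[OF lconcat_append_embeds_pair] embeds_trans[OF _ lconcat_pair_embeds_append]
    by blast
qed

section \<open>Embedding omega-sums into indecomposable sets\<close>

definition linterval :: "'q lset \<Rightarrow> nat list \<Rightarrow> nat list \<Rightarrow> 'q lset" where
  "linterval S \<beta> \<gamma> = ({x\<in>fst S. \<beta> \<le> x \<and> x < \<gamma>}, snd S)"

definition embeds_cofinally :: "('q::preorder) lset \<Rightarrow> 'q lset \<Rightarrow> bool" where
  "embeds_cofinally X S \<longleftrightarrow> (\<forall>\<beta>\<in>fst S. \<exists>\<gamma>\<in>fst S. embeds X (linterval S \<beta> \<gamma>))"

lemma embeds_cofinally_trans: "embeds Y X \<Longrightarrow> embeds_cofinally X S \<Longrightarrow> embeds_cofinally Y S"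
  unfolding embeds_cofinally_def using embeds_trans by blast

lemma embeds_ltail: "embeds (ltail S \<beta>) S"
  by (rule embeds_subset) auto

lemma cofinal_chain:
  assumes cof: "\<And>p. embeds_cofinally (X p) S" and \<beta>0: "\<beta>0 \<in> fst S"
  obtains bs where "bs 0 = \<beta>0" "\<And>p. bs p \<in> fst S"
    "\<And>p. embeds (X p) (linterval S (bs p) (bs (Suc p)))"
proof -
  obtain G where G: "\<And>p \<beta>. \<beta> \<in> fst S \<Longrightarrow> G p \<beta> \<in> fst S \<and> embeds (X p) (linterval S \<beta> (G p \<beta>))"
    using cof unfolding embeds_cofinally_def by metis
  define bs where "bs = rec_nat \<beta>0 G"
  have bs_in: "bs p \<in> fst S" for p
  proof (induct p)
    case 0 show ?case using \<beta>0 by (simp add: bs_def)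
  next
    case (Suc p)
    have "bs (Suc p) = G p (bs p)" by (simp add: bs_def)
    then show ?case using G Suc by simp
  qed
  show ?thesis
  proof
    show "bs 0 = \<beta>0" by (simp add: bs_def)
    show "bs p \<in> fst S" for p by (rule bs_in)
    show "embeds (X p) (linterval S (bs p) (bs (Suc p)))" for p
      using G[OF bs_in[of p]] by (simp add: bs_def)
  qed
qed

text \<open>The copies of the summands are placed one after the other in consecutive intervals.\<close>

lemma lsum_embeds_ltail:
  assumes ne: "\<And>p. fst (X p) \<noteq> {}" and cof: "\<And>p. embeds_cofinally (X p) S"
    and \<beta>0: "\<beta>0 \<in> fst S"
  shows "embeds (lsum X) (ltail S \<beta>0)"
proof -
  obtain bs where bs0: "bs 0 = \<beta>0" and bs_in: "\<And>p. bs p \<in> fst S"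
    and bs: "\<And>p. embeds (X p) (linterval S (bs p) (bs (Suc p)))"
    using cofinal_chain[of X S \<beta>0, OF cof \<beta>0] by blast
  obtain F where F: "\<And>p. embedding (F p) (X p) (linterval S (bs p) (bs (Suc p)))"
    using bs unfolding embeds_def by metis
  have F_in: "F p a \<in> fst S \<and> bs p \<le> F p a \<and> F p a < bs (Suc p)" if "a \<in> fst (X p)" for p a
    using embeddingD(1)[OF F that] by (simp add: linterval_def)
  have bs_step: "bs p < bs (Suc p)" for p
    using ne F_in by (meson all_not_in_conv le_less_trans)
  have bs_mono: "bs p \<le> bs q" if "p \<le> q" for p q
    using lift_Suc_mono_le[of bs, OF _ that] bs_step less_imp_le by blast
  have "embedding (\<lambda>xs. F (hd xs) (tl xs)) (lsum X) (ltail S \<beta>0)"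
  proof (rule embeddingI)
    fix i assume "i \<in> fst (lsum X)"
    then obtain p a where i: "i = p # a" "a \<in> fst (X p)" by (auto simp: mem_lsum)
    show "F (hd i) (tl i) \<in> fst (ltail S \<beta>0)"
      using F_in[OF i(2)] bs_mono[of 0 p] by (auto simp: i bs0)
    show "snd (lsum X) i \<le> snd (ltail S \<beta>0) (F (hd i) (tl i))"
      using embeddingD(2)[OF F i(2)] by (simp add: i linterval_def)
  next
    fix i j assume "i \<in> fst (lsum X)" "j \<in> fst (lsum X)" "i < j"
    then obtain p a q b where i: "i = p # a" "a \<in> fst (X p)" and j: "j = q # b" "b \<in> fst (X q)"
      and "p < q \<or> p = q \<and> a < b"
      by (auto simp: mem_lsum)
    then show "F (hd i) (tl i) < F (hd j) (tl j)"
    proof (elim disjE conjE)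
      assume "p < q"
      then have "F p a < bs q"
        using F_in[OF i(2)] bs_mono[of "Suc p" q] by (meson Suc_leI less_le_trans)
      then show ?thesis using F_in[OF j(2)] i j by (simp add: less_le_trans)
    qed (use embeddingD(3)[OF F] i j in simp)
  qed
  thus ?thesis unfolding embeds_def by blast
qed

lemma lomega_embeds_if_cofinal:
  assumes "fst X \<noteq> {}" "embeds_cofinally X S" "\<beta>0 \<in> fst S"
  shows "embeds (lomega X) S"
  using lsum_embeds_ltail[of "\<lambda>_. X" S \<beta>0] assms embeds_ltail embeds_trans
  unfolding lomega_def by blast

text \<open>Send X to the first copy of the omega-power and move it into the final segment by
  indecomposability; the image of the second copy bounds it.\<close>

lemma lindec_embeds_cofinally:
  assumes ind: "lindec S" and om: "embeds (lomega X) S" and ne: "fst X \<noteq> {}"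
  shows "embeds_cofinally X S"
  unfolding embeds_cofinally_def
proof
  fix \<beta> assume \<beta>: "\<beta> \<in> fst S"
  obtain g where g: "embedding g S (ltail S \<beta>)"
    using ind \<beta> unfolding lindec_def embeds_def by blast
  obtain f where f: "embedding f (lomega X) S" using om unfolding embeds_def by blast
  obtain a0 where a0: "a0 \<in> fst X" using ne by blast
  have fa0: "f (1 # a0) \<in> fst S" using embeddingD(1)[OF f] a0 by simp
  define \<gamma> where "\<gamma> = g (f (1 # a0))"
  have \<gamma>: "\<gamma> \<in> fst S" using embeddingD(1)[OF g fa0] by (simp add: \<gamma>_def)
  have "embedding (\<lambda>a. g (f (0 # a))) X (linterval S \<beta> \<gamma>)"
  proof (rule embeddingI)
    fix i assume i: "i \<in> fst X"
    have fi: "f (0 # i) \<in> fst S" using embeddingD(1)[OF f] i by simp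
    have "f (0 # i) < f (1 # a0)" using embeddingD(3)[OF f] i a0 by simp
    hence "g (f (0 # i)) < \<gamma>" unfolding \<gamma>_def using embeddingD(3)[OF g fi fa0] by simp
    with embeddingD(1)[OF g fi] show "g (f (0 # i)) \<in> fst (linterval S \<beta> \<gamma>)"
      by (simp add: linterval_def)
    show "snd X i \<le> snd (linterval S \<beta> \<gamma>) (g (f (0 # i)))"
      using embeddingD(2)[OF f, of "0 # i"] embeddingD(2)[OF g fi] i
      by (auto simp: linterval_def intro: order_trans)
  next
    fix i j assume "i \<in> fst X" "j \<in> fst X" "i < j"
    then show "g (f (0 # i)) < g (f (0 # j))"
      using embeddingD(3)[OF f, of "0 # i" "0 # j"] embeddingD(3)[OF g] embeddingD(1)[OF f] by simp
  qed
  with \<gamma> show "\<exists>\<gamma>\<in>fst S. embeds X (linterval S \<beta> \<gamma>)"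
    unfolding embeds_def by blast
qed

lemma mult_add_less_iff:
  fixes c c' i i' n :: nat
  assumes "i < n" "i' < n"
  shows "c * n + i < c' * n + i' \<longleftrightarrow> c < c' \<or> c = c' \<and> i < i'"
proof -
  have "c * n + i < c' * n + i'" if "c < c'"
  proof -
    have "c * n + i < Suc c * n" using assms by simp
    also have "\<dots> \<le> c' * n" using that by (intro mult_le_mono1) simp
    finally show ?thesis by simp
  qed
  moreover have "c * n + i < c' * n + i' \<Longrightarrow> c = c' \<Longrightarrow> i < i'" by simp
  moreover have "c' * n + i' < c * n + i" if "c' < c"
  proof -
    have "c' * n + i' < Suc c' * n" using assms by simp
    also have "\<dots> \<le> c * n" using that by (intro mult_le_mono1) simp
    finally show ?thesis by simp
  qed
  ultimately show ?thesis by (metis add_less_cancel_left less_asym linorder_neqE_nat)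
qed

lemma mult_add_eq_iff:
  fixes c c' i i' n :: nat
  assumes "i < n" "i' < n"
  shows "c * n + i = c' * n + i' \<longleftrightarrow> c = c' \<and> i = i'"
proof
  assume "c * n + i = c' * n + i'"
  then have "(c * n + i) div n = (c' * n + i') div n" "(c * n + i) mod n = (c' * n + i') mod n"
    by simp_all
  then show "c = c' \<and> i = i'" using assms by simp
qed simp

lemma lomega_lconcat_embeds_lsum:
  assumes "L \<noteq> []"
  shows "embeds (lomega (lconcat L)) (lsum (\<lambda>p. L ! (p mod length L)))"
proof -
  define n where "n = length L"
  define h where "h xs = (hd xs * n + hd (tl xs)) # tl (tl xs)" for xs
  have "embedding h (lomega (lconcat L)) (lsum (\<lambda>p. L ! (p mod length L)))"
  proof (rule embeddingI)
    fix i assume "i \<in> fst (lomega (lconcat L))"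
    then obtain c w a where i: "i = c # w # a" "w < length L" "a \<in> fst (L ! w)"
      by (auto simp: mem_lomega mem_lconcat)
    show "h i \<in> fst (lsum (\<lambda>p. L ! (p mod length L)))" using i
      by (simp add: h_def n_def)
    show "snd (lomega (lconcat L)) i \<le> snd (lsum (\<lambda>p. L ! (p mod length L))) (h i)"
      using i by (simp add: h_def n_def)
  next
    fix i j assume "i \<in> fst (lomega (lconcat L))" "j \<in> fst (lomega (lconcat L))" "i < j"
    moreover from this obtain c w a c' w' a'
      where "i = c # w # a" "w < n" "j = c' # w' # a'" "w' < n"
      by (auto simp: mem_lomega mem_lconcat n_def)
    ultimately show "h i < h j" using mult_add_less_iff[of w n w' c c'] by (auto simp: h_def)
  qed
  thus ?thesis unfolding embeds_def by blast
qed

lemma lomega_lconcat_embeds_lindec: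
  assumes ind: "lindec S" and \<beta>0: "\<beta>0 \<in> fst S"
    and L: "\<And>X. X \<in> set L \<Longrightarrow> fst X \<noteq> {} \<and> embeds (lomega X) S"
  shows "embeds (lomega (lconcat L)) S"
proof (cases "L = []")
  case True then show ?thesis by (intro embeds_empty) (auto simp: mem_lomega lconcat_Nil)
next
  case False
  let ?X = "\<lambda>p. L ! (p mod length L)"
  have X: "?X p \<in> set L" for p using False by simp
  have "embeds (lsum ?X) (ltail S \<beta>0)"
    by (rule lsum_embeds_ltail[OF _ lindec_embeds_cofinally[OF ind] \<beta>0]) (use L X in auto)
  thus ?thesis using lomega_lconcat_embeds_lsum[OF False] embeds_ltail embeds_trans by blast
qed

lemma lconcat_embeds_lconcat_replicate:
  assumes "\<And>Z. Z \<in> set Zs \<Longrightarrow> \<exists>Y\<in>set L. embeds Z Y"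
  shows "embeds (lconcat Zs) (lconcat (replicate (length Zs) (lconcat L)))"
proof -
  have "\<forall>w. \<exists>k f. w < length Zs \<longrightarrow> k < length L \<and> embedding f (Zs ! w) (L ! k)"
    using assms unfolding embeds_def by (metis in_set_conv_nth nth_mem)
  then obtain K F
    where KF: "\<And>w. w < length Zs \<Longrightarrow> K w < length L \<and> embedding (F w) (Zs ! w) (L ! K w)"
    by metis
  have "embedding (\<lambda>xs. hd xs # K (hd xs) # F (hd xs) (tl xs)) (lconcat Zs)
      (lconcat (replicate (length Zs) (lconcat L)))"
  proof (rule embeddingI)
    fix i j assume "i \<in> fst (lconcat Zs)" "j \<in> fst (lconcat Zs)" "i < j"
    then obtain w a w' a' where "i = w # a" "w < length Zs" "j = w' # a'" "w < w' \<or> w = w' \<and> a < a'"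
      by (auto simp: mem_lconcat)
    then show "hd i # K (hd i) # F (hd i) (tl i) < hd j # K (hd j) # F (hd j) (tl j)"
      using \<open>i \<in> fst (lconcat Zs)\<close> \<open>j \<in> fst (lconcat Zs)\<close> embeddingD(3)[OF conjunct2[OF KF]]
      by auto
  qed (use KF embeddingD(1,2)[OF conjunct2[OF KF]] in \<open>auto simp: mem_lconcat\<close>)
  thus ?thesis unfolding embeds_def by blast
qed

text \<open>The p-th summand occupies the consecutive copies of Y starting at \<open>\<Sum>q<p. m q\<close>.\<close>

lemma lsum_lconcat_replicate_embeds_lomega:
  "embeds (lsum (\<lambda>p. lconcat (replicate (m p) Y))) (lomega Y)"
proof -
  define off where "off p = (\<Sum>q<p. m q)" for p
  have off_mono: "off (Suc p) \<le> off q" if "p < q" for p q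
    unfolding off_def using that by (intro sum_mono2) auto
  have "embedding (\<lambda>xs. (off (hd xs) + hd (tl xs)) # tl (tl xs))
      (lsum (\<lambda>p. lconcat (replicate (m p) Y))) (lomega Y)"
  proof (rule embeddingI)
    fix i j assume "i \<in> fst (lsum (\<lambda>p. lconcat (replicate (m p) Y)))"
      "j \<in> fst (lsum (\<lambda>p. lconcat (replicate (m p) Y)))" "i < j"
    then obtain p w a q w' a' where i: "i = p # w # a" "w < m p" and j: "j = q # w' # a'"
      and "p < q \<or> p = q \<and> (w < w' \<or> w = w' \<and> a < a')"
      by (auto simp: mem_lsum mem_lconcat)
    moreover have "off p + w < off q + w'" if "p < q"
      using off_mono[OF that] i(2) by (simp add: off_def)
    ultimately show "(off (hd i) + hd (tl i)) # tl (tl i) < (off (hd j) + hd (tl j)) # tl (tl j)"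
      by auto
  qed (auto simp: mem_lsum mem_lconcat)
  thus ?thesis unfolding embeds_def by blast
qed

lemma lsum_embeds_lomega_lconcat:
  assumes cov: "\<And>p. embeds (X p) (lconcat (Ws p))"
    and L: "\<And>p Z. Z \<in> set (Ws p) \<Longrightarrow> \<exists>Y\<in>set L. embeds Z Y"
  shows "embeds (lsum X) (lomega (lconcat L))"
proof -
  have "embeds (X p) (lconcat (replicate (length (Ws p)) (lconcat L)))" for p
    using cov[of p] lconcat_embeds_lconcat_replicate[OF L[of _ p]] by (rule embeds_trans)
  then have "embeds (lsum X) (lsum (\<lambda>p. lconcat (replicate (length (Ws p)) (lconcat L))))"
    by (rule lsum_mono)
  thus ?thesis
    using lsum_lconcat_replicate_embeds_lomega[of "\<lambda>p. length (Ws p)" "lconcat L"]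
    by (rule embeds_trans)
qed

lemma lomega_lconcat_mono:
  assumes "\<And>X. X \<in> set L \<Longrightarrow> \<exists>Y\<in>set L'. embeds X Y"
  shows "embeds (lomega (lconcat L)) (lomega (lconcat L'))"
  unfolding lomega_def[of "lconcat L"]
  by (rule lsum_embeds_lomega_lconcat[OF embeds_refl]) (rule assms)

section \<open>Trees as labelled sets\<close>

definition list_of_fset :: "'a fset \<Rightarrow> 'a list" where
  "list_of_fset S = (SOME xs. set xs = fset S)"

lemma set_list_of_fset [simp]: "set (list_of_fset S) = fset S"
  unfolding list_of_fset_def by (rule someI_ex) (rule finite_list, simp)

text \<open>A node stands for the omega-power of the concatenation of its children, listed in
  an arbitrary order; the order does not matter up to equivalence.\<close>

primrec tree_lset :: "'q ftree \<Rightarrow> 'q lset" where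
  "tree_lset (Leaf x) = ({[]}, \<lambda>_. x)"
| "tree_lset (Node ts) = lomega (lconcat (list_of_fset (tree_lset |`| ts)))"

inductive_cases tree_wf_NodeE: "tree_wf (Node ts)"

lemma child_index:
  assumes "t |\<in>| ts"
  obtains i where "i < length (list_of_fset (tree_lset |`| ts))"
    "list_of_fset (tree_lset |`| ts) ! i = tree_lset t"
  using assms by (metis fimage_eqI in_set_conv_nth set_list_of_fset)

lemma tree_lset_nonempty: "tree_wf t \<Longrightarrow> fst (tree_lset t) \<noteq> {}"
proof (induct rule: tree_wf.induct)
  case (1 x) then show ?case by simp
next
  case (2 ts)
  then obtain t a where t: "t |\<in>| ts" and a: "a \<in> fst (tree_lset t)" by blast
  obtain i where "i < length (list_of_fset (tree_lset |`| ts))"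
    "list_of_fset (tree_lset |`| ts) ! i = tree_lset t"
    using child_index[OF t] .
  then have "0 # i # a \<in> fst (tree_lset (Node ts))" using a by simp
  thus ?case by blast
qed

lemma lindec_tree_lset: "lindec (tree_lset t)"
proof (cases t)
  case (Leaf x) then show ?thesis by (auto simp: lindec_def intro: embeds_subset)
qed (simp add: lindec_lomega)

lemma embeds_point_iff [simp]: "embeds ({[]}, \<lambda>_. x) Y \<longleftrightarrow> (\<exists>y\<in>fst Y. x \<le> snd Y y)"
proof
  assume "embeds ({[]}, \<lambda>_. x) Y"
  then obtain f where f: "embedding f ({[]}, \<lambda>_. x) Y" unfolding embeds_def by blast
  show "\<exists>y\<in>fst Y. x \<le> snd Y y" using embeddingD(1,2)[OF f, of "[]"] by auto
next
  assume "\<exists>y\<in>fst Y. x \<le> snd Y y"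
  then obtain y where y: "y \<in> fst Y" "x \<le> snd Y y" by blast
  have "embedding (\<lambda>_. y) ({[]}, \<lambda>_. x) Y" by (rule embeddingI) (auto simp: y)
  thus "embeds ({[]}, \<lambda>_. x) Y" unfolding embeds_def by blast
qed

lemma le_T_imp_embeds: "le_T s t \<Longrightarrow> embeds (tree_lset s) (tree_lset t)"
proof (induct rule: le_T.induct)
  case (leaf_leaf x y) then show ?case by (simp add: embeds_point_iff)
next
  case (leaf_node t ts x)
  then obtain y where y: "y \<in> fst (tree_lset t)" "x \<le> snd (tree_lset t) y"
    by (auto simp: embeds_point_iff)
  obtain i where "i < length (list_of_fset (tree_lset |`| ts))"
    "list_of_fset (tree_lset |`| ts) ! i = tree_lset t"
    using child_index[OF leaf_node(1)] .
  then have "0 # i # y \<in> fst (tree_lset (Node ts)) \<and> x \<le> snd (tree_lset (Node ts)) (0 # i # y)"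
    using y by simp
  thus ?case by (simp del: tree_lset.simps(2)) blast
next
  case (node_node ss ts)
  show ?case unfolding tree_lset.simps
    by (rule lomega_lconcat_mono) (use node_node in fastforce)
qed

text \<open>The key is eventually constant along X, namely at its maximum; indecomposability
  moves all of X into that final segment.\<close>

lemma lindec_embeds_into_fibre:
  fixes key :: "nat list \<Rightarrow> nat"
  assumes ind: "lindec X" and ne: "fst X \<noteq> {}" and f: "embedding f X Y"
    and mono: "\<And>y y'. y \<in> fst Y \<Longrightarrow> y' \<in> fst Y \<Longrightarrow> y \<le> y' \<Longrightarrow> key y \<le> key y'"
    and bounded: "\<And>a. a \<in> fst X \<Longrightarrow> key (f a) \<le> B"
  shows "\<exists>c. embeds X ({y\<in>fst Y. key y = c}, snd Y)"
proof -
  define Ks where "Ks = (\<lambda>a. key (f a)) ` fst X"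
  have fin: "finite Ks" by (rule finite_subset[of _ "{..B}"]) (auto simp: Ks_def bounded)
  obtain as where as: "as \<in> fst X" "key (f as) = Max Ks"
    using Max_in[OF fin] ne unfolding Ks_def by fastforce
  have "embedding f (ltail X as) ({y\<in>fst Y. key y = Max Ks}, snd Y)"
  proof (rule embeddingI)
    fix a assume a: "a \<in> fst (ltail X as)"
    have "key (f as) \<le> key (f a)"
      using a as mono[OF embeddingD(1)[OF f as(1)] embeddingD(1)[OF f] embedding_le[OF f as(1)]]
      by simp
    moreover have "key (f a) \<le> Max Ks" using fin a by (auto simp: Ks_def)
    ultimately show "f a \<in> fst ({y\<in>fst Y. key y = Max Ks}, snd Y)"
      using a as embeddingD(1)[OF f] by simp
  qed (use embeddingD(2,3)[OF f] in auto)
  moreover obtain g where "embedding g X (ltail X as)"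
    using ind as(1) unfolding lindec_def embeds_def by blast
  ultimately show ?thesis unfolding embeds_def using embedding_comp by blast
qed

lemma lomega_lconcat_fibre_embeds:
  assumes y0: "y0 \<in> fst (lomega (lconcat L))"
  shows "\<exists>Y\<in>set L. embeds ({y\<in>fst (lomega (lconcat L)).
      hd y * length L + hd (tl y) = hd y0 * length L + hd (tl y0)}, snd (lomega (lconcat L))) Y"
proof -
  let ?F = "({y\<in>fst (lomega (lconcat L)).
      hd y * length L + hd (tl y) = hd y0 * length L + hd (tl y0)},
    snd (lomega (lconcat L)))"
  obtain c0 j0 b0 where c0: "y0 = c0 # j0 # b0" "j0 < length L"
    using y0 by (auto simp: mem_lomega mem_lconcat)
  have fibre: "\<exists>b. y = c0 # j0 # b \<and> b \<in> fst (L ! j0)" if "y \<in> fst ?F" for y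
  proof -
    obtain c j b where y: "y = c # j # b" "j < length L" "b \<in> fst (L ! j)"
      using \<open>y \<in> fst ?F\<close> by (auto simp: mem_lomega mem_lconcat)
    then have "c * length L + j = c0 * length L + j0" using \<open>y \<in> fst ?F\<close> c0 by simp
    thus ?thesis using mult_add_eq_iff[OF y(2) c0(2)] y by simp
  qed
  have "embedding (\<lambda>y. tl (tl y)) ?F (L ! j0)"
  proof (rule embeddingI)
    fix y y' assume "y \<in> fst ?F" "y' \<in> fst ?F"
    then obtain b b' where "y = c0 # j0 # b" "b \<in> fst (L ! j0)" "y' = c0 # j0 # b'"
      using fibre[of y] fibre[of y'] by auto
    thus "tl (tl y) \<in> fst (L ! j0)" "snd ?F y \<le> snd (L ! j0) (tl (tl y))"
      "y < y' \<Longrightarrow> tl (tl y) < tl (tl y')" by simp_all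
  qed
  thus ?thesis using c0(2) unfolding embeds_def by auto
qed

text \<open>The (copy, component) index of the image of the first copy of X, read as a number, is
  bounded by that of the second copy; indecomposability then confines X to one component.\<close>

lemma lindec_component_embeds:
  assumes f: "embedding f (lomega (lconcat L)) (lomega (lconcat L'))"
    and X: "X \<in> set L" "fst X \<noteq> {}" "lindec X"
  shows "\<exists>Y\<in>set L'. embeds X Y"
proof -
  obtain i where i: "i < length L" "L ! i = X" using X(1) by (auto simp: in_set_conv_nth)
  obtain a0 where a0: "a0 \<in> fst X" using X(2) by blast
  define key where "key xs = hd xs * length L' + hd (tl xs)" for xs :: "nat list"
  let ?Y = "lomega (lconcat L')"
  have f0: "embedding (\<lambda>a. f (0 # i # a)) X ?Y"
  proof (rule embeddingI)
    fix a b assume a: "a \<in> fst X"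
    then have a': "0 # i # a \<in> fst (lomega (lconcat L))" using i by simp
    show "f (0 # i # a) \<in> fst ?Y" using embeddingD(1)[OF f a'] .
    show "snd X a \<le> snd ?Y (f (0 # i # a))" using embeddingD(2)[OF f a'] i by simp
    assume "b \<in> fst X" "a < b"
    then show "f (0 # i # a) < f (0 # i # b)" using embeddingD(3)[OF f a'] i by simp
  qed
  have key_mono: "key y \<le> key y'" if y: "y \<in> fst ?Y" "y' \<in> fst ?Y" and le: "y \<le> y'" for y y'
  proof -
    obtain c j b c' j' b' where "y = c # j # b" "j < length L'" "y' = c' # j' # b'" "j' < length L'"
      using y by (auto simp: mem_lomega mem_lconcat)
    thus ?thesis using le mult_add_less_iff[of j "length L'" j' c c']
      by (auto simp: key_def le_less)
  qed
  have bound: "key (f (0 # i # a)) \<le> key (f (1 # i # a0))" if a: "a \<in> fst X" for a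
  proof (rule key_mono)
    have "0 # i # a \<in> fst (lomega (lconcat L))" "1 # i # a0 \<in> fst (lomega (lconcat L))"
      using a a0 i by simp_all
    thus "f (0 # i # a) \<in> fst ?Y" "f (1 # i # a0) \<in> fst ?Y" "f (0 # i # a) \<le> f (1 # i # a0)"
      using embeddingD(1,3)[OF f] by (simp_all add: less_imp_le)
  qed
  obtain c where c: "embeds X ({y\<in>fst ?Y. key y = c}, snd ?Y)"
    using lindec_embeds_into_fibre[where key = key, OF X(3,2) f0 key_mono bound] by blast
  then obtain y0 where y0: "y0 \<in> fst ?Y" "key y0 = c"
    using embeds_nonempty[OF c X(2)] by auto
  obtain Y where "Y \<in> set L'" "embeds ({y\<in>fst ?Y. key y = c}, snd ?Y) Y"
    using lomega_lconcat_fibre_embeds[OF y0(1)] y0(2) unfolding key_def by auto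
  then show ?thesis using c embeds_trans by blast
qed

lemma Leaf_le_T_if_embeds: "embeds (tree_lset (Leaf x)) (tree_lset t) \<Longrightarrow> le_T (Leaf x) t"
proof (induct t)
  case (Leaf y) then show ?case by (auto simp: embeds_point_iff intro: le_T.intros)
next
  case (Node ts)
  then obtain c i a where i: "i < length (list_of_fset (tree_lset |`| ts))"
    "a \<in> fst (list_of_fset (tree_lset |`| ts) ! i)"
    "x \<le> snd (list_of_fset (tree_lset |`| ts) ! i) a"
    by (auto simp: mem_lomega mem_lconcat)
  moreover obtain t where t: "t |\<in>| ts" "list_of_fset (tree_lset |`| ts) ! i = tree_lset t"
    using nth_mem[OF i(1)] by auto
  ultimately have "embeds (tree_lset (Leaf x)) (tree_lset t)" by auto
  thus ?case using Node t(1) by (blast intro: le_T.intros)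
qed

lemma embeds_imp_le_T:
  "tree_wf s \<Longrightarrow> tree_wf t \<Longrightarrow> embeds (tree_lset s) (tree_lset t) \<Longrightarrow> le_T s t"
proof (induct s arbitrary: t rule: tree_wf.induct)
  case (1 x) then show ?case using Leaf_le_T_if_embeds by blast
next
  case (2 ss)
  obtain f where f: "embedding f (tree_lset (Node ss)) (tree_lset t)"
    using 2(4) unfolding embeds_def by blast
  show ?case
  proof (cases t)
    case (Leaf y)
    obtain s0 a where "s0 |\<in>| ss" "a \<in> fst (tree_lset s0)"
      using 2(1,2) tree_lset_nonempty by blast
    then obtain i
      where i: "0 # i # a \<in> fst (tree_lset (Node ss))" "1 # i # a \<in> fst (tree_lset (Node ss))"
      by (metis child_index Cons_mem_lomega Cons_mem_lconcat tree_lset.simps(2))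
    then have "f (0 # i # a) = f (1 # i # a)"
      using embeddingD(1)[OF f] by (simp add: Leaf)
    with embedding_inj[OF f i] show ?thesis by simp
  next
    case (Node ts)
    have "\<exists>t'. t' |\<in>| ts \<and> le_T s t'" if s: "s |\<in>| ss" for s
    proof -
      have "\<exists>Y\<in>set (list_of_fset (tree_lset |`| ts)). embeds (tree_lset s) Y"
        by (rule lindec_component_embeds[OF f[unfolded Node tree_lset.simps]])
          (use s 2(2) tree_lset_nonempty lindec_tree_lset in auto)
      then obtain t' where "t' |\<in>| ts" "embeds (tree_lset s) (tree_lset t')" by auto
      thus ?thesis using 2(2) 2(3) s Node by (blast elim: tree_wf_NodeE)
    qed
    thus ?thesis using Node by (blast intro: le_T.intros)
  qed
qed

theorem le_T_iff_embeds:
  "tree_wf s \<Longrightarrow> tree_wf t \<Longrightarrow> le_T s t \<longleftrightarrow> embeds (tree_lset s) (tree_lset t)"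
  using embeds_imp_le_T le_T_imp_embeds by blast

lemma lequiv_Node:
  assumes ind: "lindec S" and \<beta>0: "\<beta>0 \<in> fst S" and cov: "embeds S (lomega (lconcat Xs))"
    and above: "\<And>X. X \<in> set Xs \<Longrightarrow> \<exists>t. t |\<in>| C \<and> embeds X (tree_lset t)"
    and below: "\<And>t. t |\<in>| C \<Longrightarrow> tree_wf t \<and> embeds (lomega (tree_lset t)) S"
  shows "lequiv S (tree_lset (Node C))"
proof
  have "embeds (lomega (lconcat Xs)) (tree_lset (Node C))"
    unfolding tree_lset.simps by (rule lomega_lconcat_mono) (use above in auto)
  thus "embeds S (tree_lset (Node C))" using cov embeds_trans by blast
  show "embeds (tree_lset (Node C)) S"
    unfolding tree_lset.simps
  proof (rule lomega_lconcat_embeds_lindec[OF ind \<beta>0])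
    fix X assume "X \<in> set (list_of_fset (tree_lset |`| C))"
    then obtain t where "t |\<in>| C" "X = tree_lset t" by auto
    thus "fst X \<noteq> {} \<and> embeds (lomega X) S" using below tree_lset_nonempty by blast
  qed
qed

section \<open>Sequences of length omega^n with finite range\<close>

fun trees_upto :: "'q set \<Rightarrow> nat \<Rightarrow> 'q ftree set" where
  "trees_upto R 0 = Leaf ` R"
| "trees_upto R (Suc n) = trees_upto R n \<union> Node ` {S. fset S \<subseteq> trees_upto R n}"

lemma finite_fsets_subset: "finite X \<Longrightarrow> finite {S. fset S \<subseteq> X}"
  by (rule finite_imageD[of fset])
    (auto intro: finite_subset[of _ "Pow X"] simp: inj_on_def fset_inject)

lemma finite_trees_upto: "finite R \<Longrightarrow> finite (trees_upto R n)"
  by (induct n) (simp_all add: finite_fsets_subset)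

lemma trees_upto_mono_set: "R \<subseteq> R' \<Longrightarrow> trees_upto R n \<subseteq> trees_upto R' n"
  by (induct n) fastforce+

lemma trees_upto_mono_height: "h \<le> n \<Longrightarrow> trees_upto R h \<subseteq> trees_upto R n"
  by (induct n) (auto simp: le_Suc_eq)

lemma trees_upto_mono: "R \<subseteq> R' \<Longrightarrow> h \<le> n \<Longrightarrow> trees_upto R h \<subseteq> trees_upto R' n"
  using trees_upto_mono_set[of R R' h] trees_upto_mono_height[of h n R'] by (rule subset_trans)

abbreviation positions :: "nat \<Rightarrow> nat list set" where
  "positions n \<equiv> {xs. length xs = n}"

text \<open>A piece (h, \<rho>) is the sequence of length omega^h labelled by \<rho>.\<close>

type_synonym 'q piece = "nat \<times> (nat list \<Rightarrow> 'q)"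

definition piece_seq :: "'q piece \<Rightarrow> 'q lset" where
  "piece_seq P = omega_seq (fst P) (snd P)"

lemma fst_piece_seq [simp]: "fst (piece_seq P) = positions (fst P)"
  by (simp add: piece_seq_def)

lemma snd_piece_seq [simp]: "snd (piece_seq P) = snd P"
  by (simp add: piece_seq_def)

definition piece_of :: "nat \<Rightarrow> (nat list \<Rightarrow> 'q::preorder) \<Rightarrow> 'q piece \<Rightarrow> bool" where
  "piece_of n l P \<longleftrightarrow> fst P \<le> n \<and> lindec (piece_seq P) \<and>
     snd P ` positions (fst P) \<subseteq> l ` positions n \<and> embeds (piece_seq P) (omega_seq n l)"

text \<open>The counterpart of \<open>factors\<close> for pieces.\<close>

definition factor_candidate :: "nat \<Rightarrow> (nat list \<Rightarrow> 'q::preorder) \<Rightarrow> 'q piece \<Rightarrow> bool" where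
  "factor_candidate n l P \<longleftrightarrow> fst P < n \<and> lindec (piece_seq P) \<and>
     snd P ` positions (fst P) \<subseteq> l ` positions n \<and> embeds (lomega (piece_seq P)) (omega_seq n l)"

definition has_indec_cover :: "nat \<Rightarrow> (nat list \<Rightarrow> 'q::preorder) \<Rightarrow> bool" where
  "has_indec_cover n l \<longleftrightarrow>
     (\<exists>W. (\<forall>P\<in>set W. piece_of n l P) \<and> embeds (omega_seq n l) (lconcat (map piece_seq W)))"

definition has_factor_cover :: "nat \<Rightarrow> (nat list \<Rightarrow> 'q::preorder) \<Rightarrow> bool" where
  "has_factor_cover n l \<longleftrightarrow>
     (\<exists>W. (\<forall>P\<in>set W. factor_candidate n l P) \<and>
        embeds (omega_seq n l) (lomega (lconcat (map piece_seq W))))"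

definition has_tree_repr :: "nat \<Rightarrow> (nat list \<Rightarrow> 'q::preorder) \<Rightarrow> bool" where
  "has_tree_repr n l \<longleftrightarrow>
     (\<exists>t\<in>trees_upto (l ` positions n) n. tree_wf t \<and> lequiv (omega_seq n l) (tree_lset t))"

lemma piece_lequiv_tree:
  assumes "has_tree_repr (fst P) (snd P)" "snd P ` positions (fst P) \<subseteq> R" "fst P \<le> k"
  shows "\<exists>t\<in>trees_upto R k. tree_wf t \<and> lequiv (piece_seq P) (tree_lset t)"
  using assms trees_upto_mono[of "snd P ` positions (fst P)" R "fst P" k]
  unfolding has_tree_repr_def piece_seq_def by blast

lemma finite_lequiv_cover:
  fixes \<phi> :: "'a \<Rightarrow> ('q::preorder) lset" and \<psi> :: "'b \<Rightarrow> 'q lset"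
  assumes "finite T" and "\<And>a. a \<in> A \<Longrightarrow> \<exists>t\<in>T. lequiv (\<phi> a) (\<psi> t)"
  obtains W where "set W \<subseteq> A" "\<And>a. a \<in> A \<Longrightarrow> \<exists>b\<in>set W. lequiv (\<phi> a) (\<phi> b)"
proof -
  define \<tau> where "\<tau> a = (SOME t. t \<in> T \<and> lequiv (\<phi> a) (\<psi> t))" for a
  have \<tau>: "\<tau> a \<in> T \<and> lequiv (\<phi> a) (\<psi> (\<tau> a))" if "a \<in> A" for a
    unfolding \<tau>_def by (rule someI_ex) (use assms(2)[OF that] in blast)
  have "finite (\<tau> ` A)" using \<tau> assms(1) by (blast intro: finite_subset)
  then obtain ts where ts: "set ts = \<tau> ` A" by (rule finite_list[THEN exE])
  define rep where "rep t = (SOME a. a \<in> A \<and> \<tau> a = t)" for t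
  have rep: "rep t \<in> A \<and> \<tau> (rep t) = t" if "t \<in> \<tau> ` A" for t
    unfolding rep_def by (rule someI_ex) (use that in blast)
  show ?thesis
  proof
    show W: "set (map rep ts) \<subseteq> A" using rep ts by auto
    fix a assume a: "a \<in> A"
    then have "rep (\<tau> a) \<in> set (map rep ts)" "\<tau> (rep (\<tau> a)) = \<tau> a"
      using rep ts by auto
    then show "\<exists>b\<in>set (map rep ts). lequiv (\<phi> a) (\<phi> b)"
      using \<tau> a W embeds_trans by (metis subsetD)
  qed
qed

text \<open>A sequence of length omega^(k+1) is the sum of the omega-sequence of its blocks of
  length omega^k, the j-th block consisting of the positions with first digit j.\<close>

definition block :: "(nat list \<Rightarrow> 'q) \<Rightarrow> nat \<Rightarrow> nat list \<Rightarrow> 'q" where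
  "block l j = (\<lambda>v. l (j # v))"

definition shift_blocks :: "(nat list \<Rightarrow> 'q) \<Rightarrow> nat \<Rightarrow> nat list \<Rightarrow> 'q" where
  "shift_blocks l J = (\<lambda>xs. l ((hd xs + J) # tl xs))"

abbreviation blocks :: "(nat list \<Rightarrow> 'q) \<Rightarrow> nat \<Rightarrow> nat \<Rightarrow> nat \<Rightarrow> 'q lset" where
  "blocks l k c c' \<equiv> lconcat (map (\<lambda>j. omega_seq k (block l j)) [c..<c'])"

lemma block_range: "block l j ` positions k \<subseteq> l ` positions (Suc k)"
  by (auto simp: block_def)

lemma shift_blocks_range: "shift_blocks l J ` positions (Suc k) \<subseteq> l ` positions (Suc k)"
  by (auto simp: shift_blocks_def)

lemma block_shift_blocks: "block (shift_blocks l J) p = block l (p + J)"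
  by (simp add: block_def shift_blocks_def)

lemma omega_seq_Suc_embeds_lsum: "embeds (omega_seq (Suc k) l) (lsum (\<lambda>j. omega_seq k (block l j)))"
  by (rule embeds_subset) (auto simp: mem_lsum block_def length_Suc_conv)

lemma block_embeds: "embeds (omega_seq k (block l j)) (omega_seq (Suc k) l)"
proof -
  have "embedding (\<lambda>v. j # v) (omega_seq k (block l j)) (omega_seq (Suc k) l)"
    by (rule embeddingI) (auto simp: block_def)
  thus ?thesis unfolding embeds_def by blast
qed

lemma shift_blocks_embeds: "embeds (omega_seq (Suc k) (shift_blocks l J)) (omega_seq (Suc k) l)"
proof -
  have "embedding (\<lambda>xs. (hd xs + J) # tl xs)
      (omega_seq (Suc k) (shift_blocks l J)) (omega_seq (Suc k) l)"
  proof (rule embeddingI)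
    fix i j assume "i \<in> fst (omega_seq (Suc k) (shift_blocks l J))"
      "j \<in> fst (omega_seq (Suc k) (shift_blocks l J))" "i < j"
    then show "(hd i + J) # tl i < (hd j + J) # tl j" by (cases i; cases j) auto
  qed (auto simp: shift_blocks_def)
  thus ?thesis unfolding embeds_def by blast
qed

lemma lindec_block_embeds_cofinally:
  assumes ind: "lindec (omega_seq (Suc k) l)"
  shows "embeds_cofinally (omega_seq k (block l j)) (omega_seq (Suc k) l)"
  unfolding embeds_cofinally_def
proof
  let ?S = "omega_seq (Suc k) l"
  fix \<beta> assume \<beta>: "\<beta> \<in> fst ?S"
  obtain g where g: "embedding g ?S (ltail ?S \<beta>)"
    using ind \<beta> unfolding lindec_def embeds_def by blast
  define \<gamma> where "\<gamma> = g (Suc j # replicate k 0)"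
  have e: "Suc j # replicate k 0 \<in> fst ?S" by simp
  have "embedding (\<lambda>v. g (j # v)) (omega_seq k (block l j)) (linterval ?S \<beta> \<gamma>)"
  proof (rule embeddingI)
    fix v assume "v \<in> fst (omega_seq k (block l j))"
    hence jv: "j # v \<in> fst ?S" by simp
    have "g (j # v) < \<gamma>" unfolding \<gamma>_def by (rule embeddingD(3)[OF g jv e]) simp
    thus "g (j # v) \<in> fst (linterval ?S \<beta> \<gamma>)"
      using embeddingD(1)[OF g jv] by (simp add: linterval_def)
    show "snd (omega_seq k (block l j)) v \<le> snd (linterval ?S \<beta> \<gamma>) (g (j # v))"
      using embeddingD(2)[OF g jv] by (simp add: block_def linterval_def)
  next
    fix v w assume "v \<in> fst (omega_seq k (block l j))" "w \<in> fst (omega_seq k (block l j))" "v < w"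
    then show "g (j # v) < g (j # w)" using embeddingD(3)[OF g, of "j # v" "j # w"] by simp
  qed
  moreover have "\<gamma> \<in> fst ?S" using embeddingD(1)[OF g e] by (simp add: \<gamma>_def)
  ultimately show "\<exists>\<gamma>\<in>fst ?S. embeds (omega_seq k (block l j)) (linterval ?S \<beta> \<gamma>)"
    unfolding embeds_def by blast
qed

text \<open>The blocks can be placed one after the other in any tail.\<close>

lemma lindec_if_blocks_recur:
  assumes recur: "\<And>p c. \<exists>c'. embeds (omega_seq k (block l p)) (blocks l k c c')"
  shows "lindec (omega_seq (Suc k) l)"
  unfolding lindec_def
proof
  let ?S = "omega_seq (Suc k) l"
  fix d assume d: "d \<in> fst ?S"
  have "embeds_cofinally (omega_seq k (block l p)) ?S" for p
    unfolding embeds_cofinally_def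
  proof
    fix \<beta> assume "\<beta> \<in> fst ?S"
    then obtain c v where \<beta>: "\<beta> = c # v" by (cases \<beta>) auto
    obtain c' where c': "embeds (omega_seq k (block l p)) (blocks l k (Suc c) c')"
      using recur by blast
    have "embedding (\<lambda>x. (Suc c + hd x) # tl x)
        (blocks l k (Suc c) c') (linterval ?S \<beta> (c' # replicate k 0))"
      by (rule embeddingI) (auto simp: mem_lconcat linterval_def \<beta> block_def)
    then have "embeds (blocks l k (Suc c) c') (linterval ?S \<beta> (c' # replicate k 0))"
      unfolding embeds_def by blast
    moreover have "c' # replicate k 0 \<in> fst ?S" by simp
    ultimately show "\<exists>\<gamma>\<in>fst ?S. embeds (omega_seq k (block l p)) (linterval ?S \<beta> \<gamma>)"
      using c' embeds_trans by blast
  qed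
  then have "embeds (lsum (\<lambda>p. omega_seq k (block l p))) (ltail ?S d)"
    by (intro lsum_embeds_ltail d omega_seq_nonempty)
  then show "embeds ?S (ltail ?S d)" using omega_seq_Suc_embeds_lsum embeds_trans by blast
qed

lemma lconcat_embeds_blocks:
  assumes "\<And>X. X \<in> set Xs \<Longrightarrow> infinite {j. embeds X (omega_seq k (block l j))}"
  shows "\<exists>c'\<ge>c. embeds (lconcat Xs) (blocks l k c c')"
  using assms
proof (induct Xs arbitrary: c)
  case Nil
  show ?case by (auto intro!: embeds_empty simp: lconcat_Nil)
next
  case (Cons X Xs)
  obtain j where j: "c \<le> j" "embeds X (omega_seq k (block l j))"
    using Cons.prems[of X] unfolding infinite_nat_iff_unbounded_le by auto
  obtain c' where c': "Suc j \<le> c'" "embeds (lconcat Xs) (blocks l k (Suc j) c')"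
    using Cons by force
  have "omega_seq k (block l j) \<in> set (map (\<lambda>j. omega_seq k (block l j)) [c..<Suc j])"
    using j(1) by simp
  then have "embeds (omega_seq k (block l j)) (blocks l k c (Suc j))"
    by (rule embeds_lconcat_member)
  then have "embeds (lconcat [X]) (blocks l k c (Suc j))"
    using embeds_trans[OF conjunct1[OF lconcat_singleton] j(2)] embeds_trans by blast
  then have "embeds (lconcat ([X] @ Xs)) (lconcat (map (\<lambda>j. omega_seq k (block l j)) [c..<Suc j] @
      map (\<lambda>j. omega_seq k (block l j)) [Suc j..<c']))"
    using c'(2) by (rule lconcat_append_embeds)
  moreover have "[c..<Suc j] @ [Suc j..<c'] = [c..<c']"
    using upt_add_eq_append[of c "Suc j" "c' - Suc j"] j(1) c'(1) by simp
  ultimately show ?case using j(1) c'(1)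
    by (metis append_Cons append_Nil le_SucI map_append order_trans)
qed

lemma omega_seq_Suc_embeds_prefix_tail:
  "embeds (omega_seq (Suc k) l)
     (lconcat (map (\<lambda>j. omega_seq k (block l j)) [0..<J] @ [omega_seq (Suc k) (shift_blocks l J)]))"
  (is "embeds ?S ?T")
proof -
  define h where "h xs = (if hd xs < J then xs else J # (hd xs - J) # tl xs)" for xs :: "nat list"
  have "embedding h ?S ?T"
  proof (rule embeddingI)
    fix xs assume "xs \<in> fst ?S"
    then obtain c v where xs: "xs = c # v" "length v = k" by (auto simp: length_Suc_conv)
    show "h xs \<in> fst ?T" using xs by (simp add: h_def nth_append)
    show "snd ?S xs \<le> snd ?T (h xs)"
      using xs by (simp add: h_def nth_append block_def shift_blocks_def)
  next
    fix xs ys assume "xs \<in> fst ?S" "ys \<in> fst ?S" "xs < ys"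
    then obtain c v c' v' where "xs = c # v" "ys = c' # v'" "c < c' \<or> c = c' \<and> v < v'"
      by (auto simp: length_Suc_conv)
    then show "h xs < h ys" by (auto simp: h_def)
  qed
  thus ?thesis unfolding embeds_def by blast
qed

lemma lconcat_embeds_lconcat_concat:
  "list_all2 (\<lambda>X B. embeds X (lconcat B)) A Bs \<Longrightarrow> embeds (lconcat A) (lconcat (concat Bs))"
proof (induct rule: list_all2_induct)
  case Nil
  show ?case by (auto intro!: embeds_empty simp: lconcat_Nil)
next
  case (Cons X A B Bs)
  have "embeds (lconcat [X]) (lconcat B)"
    using embeds_trans[OF conjunct1[OF lconcat_singleton] Cons(1)] .
  then have "embeds (lconcat ([X] @ A)) (lconcat (B @ concat Bs))"
    using Cons(3) by (rule lconcat_append_embeds)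
  then show ?case by simp
qed

lemma eventually_recurrent:
  fixes E :: "'a \<Rightarrow> nat \<Rightarrow> bool"
  assumes "finite T"
  obtains J where "\<And>j t. J \<le> j \<Longrightarrow> t \<in> T \<Longrightarrow> E t j \<Longrightarrow> infinite {j. E t j}"
proof -
  have "finite (\<Union>t\<in>{t\<in>T. finite {j. E t j}}. {j. E t j})" using assms by auto
  then obtain J where J: "\<forall>j\<in>(\<Union>t\<in>{t\<in>T. finite {j. E t j}}. {j. E t j}). j < J"
    unfolding finite_nat_set_iff_bounded by blast
  show ?thesis
  proof (rule that)
    fix j t assume "J \<le> j" "t \<in> T" "E t j"
    show "infinite {j. E t j}"
    proof
      assume "finite {j. E t j}"
      then have "j < J" using J \<open>t \<in> T\<close> \<open>E t j\<close> by blast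
      with \<open>J \<le> j\<close> show False by simp
    qed
  qed
qed

lemma infinite_shift:
  assumes "infinite {j. P j}"
  shows "infinite {j::nat. P (j + J)}"
  unfolding infinite_nat_iff_unbounded_le
proof
  fix m
  obtain n where "m + J \<le> n" "P n" using assms unfolding infinite_nat_iff_unbounded_le by blast
  then show "\<exists>n\<ge>m. n \<in> {j. P (j + J)}" by (intro exI[of _ "n - J"]) auto
qed

lemma has_indec_cover_0: "has_indec_cover 0 l"
proof -
  have "embedding (\<lambda>xs. 0 # xs) (omega_seq 0 l) (lconcat (map piece_seq [(0, l)]))"
    by (rule embeddingI) (auto simp: piece_seq_def)
  moreover have "piece_of 0 l (0, l)"
    by (simp add: piece_of_def piece_seq_def lindec_omega_seq_0 embeds_subset)
  ultimately show ?thesis unfolding has_indec_cover_def embeds_def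
    by (metis empty_iff set_ConsD set_empty)
qed

lemma has_tree_repr_0: "has_tree_repr 0 l"
proof -
  have "Leaf (l []) \<in> trees_upto (l ` positions 0) 0" by simp
  moreover have "lequiv (omega_seq 0 l) (tree_lset (Leaf (l [])))"
    by (auto intro!: embeds_subset)
  ultimately show ?thesis unfolding has_tree_repr_def by (blast intro: tree_wf.intros)
qed

lemma block_covers:
  fixes l :: "nat list \<Rightarrow> 'q::preorder"
  assumes cover: "\<And>\<rho>::nat list \<Rightarrow> 'q. finite (\<rho> ` positions k) \<Longrightarrow> has_indec_cover k \<rho>"
    and fin: "finite (l ` positions (Suc k))"
  obtains Wf where "\<And>j. embeds (omega_seq k (block l j)) (lconcat (map piece_seq (Wf j)))"
    and "\<And>j P. P \<in> set (Wf j) \<Longrightarrow> piece_of k (block l j) P"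
proof -
  have "finite (block l j ` positions k)" for j by (rule finite_subset[OF block_range fin])
  then have "\<forall>j. \<exists>W. (\<forall>P\<in>set W. piece_of k (block l j) P) \<and>
      embeds (omega_seq k (block l j)) (lconcat (map piece_seq W))"
    using cover unfolding has_indec_cover_def by blast
  from choice[OF this] show ?thesis using that by blast
qed

lemma block_piece_tree:
  fixes l :: "nat list \<Rightarrow> 'q::preorder"
  assumes repr: "\<And>h \<rho>::nat list \<Rightarrow> 'q. h \<le> k \<Longrightarrow> finite (\<rho> ` positions h) \<Longrightarrow>
      lindec (omega_seq h \<rho>) \<Longrightarrow> has_tree_repr h \<rho>"
    and fin: "finite (l ` positions (Suc k))" and P: "piece_of k (block l j) P"
  shows "\<exists>t\<in>trees_upto (l ` positions (Suc k)) k. tree_wf t \<and> lequiv (piece_seq P) (tree_lset t)"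
proof -
  have "snd P ` positions (fst P) \<subseteq> block l j ` positions k" using P
    by (simp add: piece_of_def)
  then have range: "snd P ` positions (fst P) \<subseteq> l ` positions (Suc k)"
    using block_range by (rule subset_trans)
  have k: "fst P \<le> k" and "lindec (omega_seq (fst P) (snd P))"
    using P unfolding piece_of_def piece_seq_def by simp_all
  then have "has_tree_repr (fst P) (snd P)" by (rule repr[OF _ finite_subset[OF range fin]])
  thus ?thesis using range k by (rule piece_lequiv_tree)
qed

lemma has_factor_cover_Suc:
  fixes l :: "nat list \<Rightarrow> 'q::preorder"
  assumes cover: "\<And>\<rho>::nat list \<Rightarrow> 'q. finite (\<rho> ` positions k) \<Longrightarrow> has_indec_cover k \<rho>"
    and repr: "\<And>h \<rho>::nat list \<Rightarrow> 'q. h \<le> k \<Longrightarrow> finite (\<rho> ` positions h) \<Longrightarrow>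
      lindec (omega_seq h \<rho>) \<Longrightarrow> has_tree_repr h \<rho>"
    and fin: "finite (l ` positions (Suc k))" and ind: "lindec (omega_seq (Suc k) l)"
  shows "has_factor_cover (Suc k) l"
proof -
  let ?R = "l ` positions (Suc k)"
  obtain Wf where Wf: "\<And>j. embeds (omega_seq k (block l j)) (lconcat (map piece_seq (Wf j)))"
    and pieces: "\<And>j P. P \<in> set (Wf j) \<Longrightarrow> piece_of k (block l j) P"
    using block_covers[OF cover fin] by blast
  define A where "A = {P. \<exists>j. P \<in> set (Wf j)}"
  have trees: "\<exists>t\<in>trees_upto ?R k. lequiv (piece_seq P) (tree_lset t)" if "P \<in> A" for P
    using that pieces block_piece_tree[OF repr fin] unfolding A_def by blast
  obtain W where W: "set W \<subseteq> A" "\<And>P. P \<in> A \<Longrightarrow> \<exists>Q\<in>set W. lequiv (piece_seq P) (piece_seq Q)"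
    using finite_lequiv_cover[where A = A and \<phi> = piece_seq, OF finite_trees_upto[OF fin] trees]
    by blast
  have "factor_candidate (Suc k) l P" if P: "P \<in> set W" for P
  proof -
    obtain j where j: "piece_of k (block l j) P" using W(1) P pieces unfolding A_def by blast
    have "embeds_cofinally (piece_seq P) (omega_seq (Suc k) l)"
      using embeds_cofinally_trans j lindec_block_embeds_cofinally[OF ind]
      unfolding piece_of_def by blast
    then have "embeds (lomega (piece_seq P)) (omega_seq (Suc k) l)"
      using lomega_embeds_if_cofinal omega_seq_nonempty[of "fst P" "snd P"]
        omega_seq_nonempty[of "Suc k" l]
      by (metis all_not_in_conv piece_seq_def)
    thus ?thesis using j block_range unfolding piece_of_def factor_candidate_def by fastforce
  qed
  moreover have "embeds (omega_seq (Suc k) l) (lomega (lconcat (map piece_seq W)))"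
  proof -
    have "embeds (lsum (\<lambda>j. omega_seq k (block l j))) (lomega (lconcat (map piece_seq W)))"
    proof (rule lsum_embeds_lomega_lconcat[OF Wf])
      fix j Z assume "Z \<in> set (map piece_seq (Wf j))"
      then obtain P where P: "P \<in> A" "Z = piece_seq P" by (auto simp: A_def)
      then show "\<exists>Y\<in>set (map piece_seq W). embeds Z Y" using W(2)[OF P(1)] by auto
    qed
    thus ?thesis using omega_seq_Suc_embeds_lsum embeds_trans by blast
  qed
  ultimately show ?thesis unfolding has_factor_cover_def by blast
qed

lemma has_tree_repr_Suc:
  fixes l :: "nat list \<Rightarrow> 'q::preorder"
  assumes repr: "\<And>h \<rho>::nat list \<Rightarrow> 'q. h \<le> k \<Longrightarrow> finite (\<rho> ` positions h) \<Longrightarrow>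
      lindec (omega_seq h \<rho>) \<Longrightarrow> has_tree_repr h \<rho>"
    and fin: "finite (l ` positions (Suc k))" and ind: "lindec (omega_seq (Suc k) l)"
    and fc: "has_factor_cover (Suc k) l"
  shows "has_tree_repr (Suc k) l"
proof -
  let ?R = "l ` positions (Suc k)" and ?S = "omega_seq (Suc k) l"
  obtain W where W: "\<And>P. P \<in> set W \<Longrightarrow> factor_candidate (Suc k) l P"
    and cov: "embeds ?S (lomega (lconcat (map piece_seq W)))"
    using fc unfolding has_factor_cover_def by blast
  define C where "C = {t \<in> trees_upto ?R k. tree_wf t \<and> embeds (lomega (tree_lset t)) ?S}"
  have finC: "finite C" using finite_trees_upto[of ?R k] fin
    by (auto simp: C_def intro: finite_subset)
  have above: "\<exists>t\<in>C. embeds (piece_seq P) (tree_lset t)" if PW: "P \<in> set W" for P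
  proof -
    have P: "fst P \<le> k" "snd P ` positions (fst P) \<subseteq> ?R" "lindec (omega_seq (fst P) (snd P))"
      "embeds (lomega (piece_seq P)) ?S"
      using W[OF PW] unfolding factor_candidate_def piece_seq_def by auto
    have "has_tree_repr (fst P) (snd P)" by (rule repr[OF P(1) finite_subset[OF P(2) fin] P(3)])
    then obtain t where t: "t \<in> trees_upto ?R k" "tree_wf t" "lequiv (piece_seq P) (tree_lset t)"
      using piece_lequiv_tree P(1,2) by blast
    then have "t \<in> C" using lomega_mono P(4) embeds_trans unfolding C_def by blast
    thus ?thesis using t(3) by blast
  qed
  have "W \<noteq> []" using embeds_lomega_lconcat_Nil[OF cov omega_seq_nonempty] by simp
  then have "C \<noteq> {}" using above by (metis empty_iff list.set_sel(1))
  let ?T = "Node (Abs_fset C)"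
  have C: "fset (Abs_fset C) = C" using finC by (simp add: Abs_fset_inverse)
  have "lequiv ?S (tree_lset ?T)"
    by (rule lequiv_Node[OF ind _ cov, of "replicate (Suc k) 0"])
      (use above C in \<open>auto simp: C_def\<close>)
  moreover have "tree_wf ?T" using \<open>C \<noteq> {}\<close> C
    by (auto simp: C_def intro!: tree_wf.intros)
  moreover have "?T \<in> trees_upto ?R (Suc k)" using C by (auto simp: C_def)
  ultimately show ?thesis unfolding has_tree_repr_def by blast
qed

lemma lindec_shift_blocks_if_recurrent:
  assumes Wf: "\<And>j. embeds (omega_seq k (block l j)) (lconcat (map piece_seq (Wf j)))"
    and recur: "\<And>j P. J \<le> j \<Longrightarrow> P \<in> set (Wf j) \<Longrightarrow>
      infinite {j. embeds (piece_seq P) (omega_seq k (block l j))}"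
  shows "lindec (omega_seq (Suc k) (shift_blocks l J))"
proof (rule lindec_if_blocks_recur)
  fix p c
  have "infinite {j. embeds X (omega_seq k (block (shift_blocks l J) j))}"
    if "X \<in> set (map piece_seq (Wf (p + J)))" for X
    using that recur[of "p + J"] infinite_shift by (fastforce simp: block_shift_blocks)
  then obtain c'
    where "embeds (lconcat (map piece_seq (Wf (p + J)))) (blocks (shift_blocks l J) k c c')"
    using lconcat_embeds_blocks by blast
  then show "\<exists>c'. embeds (omega_seq k (block (shift_blocks l J) p))
      (blocks (shift_blocks l J) k c c')"
    using Wf[of "p + J"] embeds_trans unfolding block_shift_blocks by blast
qed

lemma has_indec_cover_prefix_tail:
  fixes l :: "nat list \<Rightarrow> 'q::preorder"
  assumes Wf: "\<And>j. embeds (omega_seq k (block l j)) (lconcat (map piece_seq (Wf j)))"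
    and pieces: "\<And>j P. P \<in> set (Wf j) \<Longrightarrow> piece_of k (block l j) P"
    and ind: "lindec (omega_seq (Suc k) (shift_blocks l J))"
  shows "has_indec_cover (Suc k) l"
proof -
  define l' where "l' = shift_blocks l J"
  define W where "W = concat (map Wf [0..<J]) @ [(Suc k, l')]"
  have "list_all2 (\<lambda>X B. embeds X (lconcat B))
      (map (\<lambda>j. omega_seq k (block l j)) [0..<J] @ [omega_seq (Suc k) l'])
      (map (\<lambda>j. map piece_seq (Wf j)) [0..<J] @ [[omega_seq (Suc k) l']])"
    using Wf conjunct2[OF lconcat_singleton[of "omega_seq (Suc k) l'"]]
    by (intro list_all2_appendI) (simp_all add: list_all2_conv_all_nth)
  then have "embeds (lconcat (map (\<lambda>j. omega_seq k (block l j)) [0..<J] @ [omega_seq (Suc k) l']))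
      (lconcat (map piece_seq W))"
    using lconcat_embeds_lconcat_concat by (fastforce simp: W_def map_concat piece_seq_def comp_def)
  then have "embeds (omega_seq (Suc k) l) (lconcat (map piece_seq W))"
    using omega_seq_Suc_embeds_prefix_tail[of k l J] embeds_trans unfolding l'_def by blast
  moreover have "piece_of (Suc k) l P" if PW: "P \<in> set W" for P
  proof (cases "P = (Suc k, l')")
    case True
    then show ?thesis using ind shift_blocks_range[of l J k] shift_blocks_embeds[of k l J]
      by (simp add: piece_of_def piece_seq_def l'_def)
  next
    case False
    then obtain j where "P \<in> set (Wf j)" using PW by (auto simp: W_def)
    then show ?thesis
      using pieces block_range[of l j k] block_embeds[of k l j] embeds_trans
      unfolding piece_of_def by (meson le_SucI subset_trans)
  qed
  ultimately show ?thesis unfolding has_indec_cover_def by blast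
qed

text \<open>All trees that embed into some block from J on embed into infinitely many blocks, so
  the blocks from J on form an indecomposable piece of length omega^(k+1).\<close>

lemma has_indec_cover_Suc:
  fixes l :: "nat list \<Rightarrow> 'q::preorder"
  assumes cover: "\<And>\<rho>::nat list \<Rightarrow> 'q. finite (\<rho> ` positions k) \<Longrightarrow> has_indec_cover k \<rho>"
    and repr: "\<And>h \<rho>::nat list \<Rightarrow> 'q. h \<le> k \<Longrightarrow> finite (\<rho> ` positions h) \<Longrightarrow>
      lindec (omega_seq h \<rho>) \<Longrightarrow> has_tree_repr h \<rho>"
    and fin: "finite (l ` positions (Suc k))"
  shows "has_indec_cover (Suc k) l"
proof -
  let ?R = "l ` positions (Suc k)"
  obtain Wf where Wf: "\<And>j. embeds (omega_seq k (block l j)) (lconcat (map piece_seq (Wf j)))"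
    and pieces: "\<And>j P. P \<in> set (Wf j) \<Longrightarrow> piece_of k (block l j) P"
    using block_covers[OF cover fin] by blast
  have finT: "finite {t \<in> trees_upto ?R k. tree_wf t}"
    by (rule finite_subset[OF _ finite_trees_upto[OF fin]]) blast
  obtain J where J: "\<And>j t. J \<le> j \<Longrightarrow> t \<in> {t \<in> trees_upto ?R k. tree_wf t} \<Longrightarrow>
      embeds (tree_lset t) (omega_seq k (block l j)) \<Longrightarrow>
      infinite {j. embeds (tree_lset t) (omega_seq k (block l j))}"
    using eventually_recurrent[OF finT, of "\<lambda>t j. embeds (tree_lset t) (omega_seq k (block l j))"]
    by blast
  have "infinite {j. embeds (piece_seq P) (omega_seq k (block l j))}"
    if j: "J \<le> j" and P: "P \<in> set (Wf j)" for j P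
  proof -
    obtain t where t: "t \<in> trees_upto ?R k" "tree_wf t" "lequiv (piece_seq P) (tree_lset t)"
      using block_piece_tree[OF repr fin pieces[OF P]] by blast
    have "embeds (tree_lset t) (omega_seq k (block l j))"
      using t(3) pieces[OF P] embeds_trans unfolding piece_of_def by blast
    then have "infinite {j. embeds (tree_lset t) (omega_seq k (block l j))}" using J j t by blast
    moreover have "{j. embeds (tree_lset t) (omega_seq k (block l j))}
        \<subseteq> {j. embeds (piece_seq P) (omega_seq k (block l j))}"
      using embeds_trans[OF conjunct1[OF t(3)]] by (simp add: Collect_mono)
    ultimately show ?thesis using infinite_super by blast
  qed
  then have "lindec (omega_seq (Suc k) (shift_blocks l J))"
    by (rule lindec_shift_blocks_if_recurrent[OF Wf])
  from has_indec_cover_prefix_tail[OF Wf pieces this] show ?thesis .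
qed

lemma indec_cover_and_tree_repr:
  fixes l :: "nat list \<Rightarrow> 'q::preorder"
  assumes "finite (l ` positions n)"
  shows "has_indec_cover n l \<and> (lindec (omega_seq n l) \<longrightarrow> has_tree_repr n l)"
  using assms
proof (induct n arbitrary: l rule: less_induct)
  case (less n)
  show ?case
  proof (cases n)
    case 0 then show ?thesis using has_indec_cover_0 has_tree_repr_0 by blast
  next
    case (Suc k)
    have cover: "\<And>\<rho>::nat list \<Rightarrow> 'q. finite (\<rho> ` positions k) \<Longrightarrow> has_indec_cover k \<rho>"
      using less Suc by blast
    have repr: "\<And>h \<rho>::nat list \<Rightarrow> 'q. h \<le> k \<Longrightarrow> finite (\<rho> ` positions h) \<Longrightarrow>
        lindec (omega_seq h \<rho>) \<Longrightarrow> has_tree_repr h \<rho>"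
      using less Suc by (meson le_imp_less_Suc)
    show ?thesis
      using has_indec_cover_Suc[OF cover repr] has_tree_repr_Suc[OF repr]
        has_factor_cover_Suc[OF cover repr] less.prems Suc
      by blast
  qed
qed

theorem has_tree_repr_if_lindec:
  "finite (l ` positions n) \<Longrightarrow> lindec (omega_seq n l) \<Longrightarrow> has_tree_repr n l"
  using indec_cover_and_tree_repr by blast

theorem has_factor_cover_if_lindec:
  "finite (l ` positions (Suc k)) \<Longrightarrow> lindec (omega_seq (Suc k) l) \<Longrightarrow> has_factor_cover (Suc k) l"
  using has_factor_cover_Suc indec_cover_and_tree_repr by blast

section \<open>Ordinals below omega^omega as digit lists\<close>

text \<open>An ordinal b with \<open>length b \<le> n\<close>, i.e. below omega^n, corresponds to the
  position \<open>pad n b\<close> of length n, and the lexicographic order of positions is the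
  ordinal order; \<open>unpad\<close> is the inverse.\<close>

lemma append_less_append_iff [simp]: "(zs @ xs :: 'a::order list) < zs @ ys \<longleftrightarrow> xs < ys"
  by (induct zs) auto

lemma olt_conv: "olt a b \<longleftrightarrow> length a < length b \<or> length a = length b \<and> a < b"
proof -
  have "less_than = {(x, y). x < y}" by auto
  thus ?thesis unfolding olt_def lenlex_conv list_less_def by (auto simp: lexord_lex)
qed

definition pad :: "nat \<Rightarrow> nat list \<Rightarrow> nat list" where
  "pad n b = replicate (n - length b) 0 @ b"

definition unpad :: "nat list \<Rightarrow> nat list" where
  "unpad xs = dropWhile (\<lambda>x. x = 0) xs"

lemma length_pad [simp]: "length b \<le> n \<Longrightarrow> length (pad n b) = n"
  by (simp add: pad_def)

lemma unpad_Nil [simp]: "unpad [] = []" by (simp add: unpad_def)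
lemma unpad_Cons0 [simp]: "unpad (0 # xs) = unpad xs" by (simp add: unpad_def)
lemma unpad_Cons: "c \<noteq> 0 \<Longrightarrow> unpad (c # xs) = c # xs" by (simp add: unpad_def)

lemma unpad_replicate_append [simp]: "unpad (replicate k 0 @ xs) = unpad xs"
  by (induct k) simp_all

lemma unpad_is_ord: "is_ord b \<Longrightarrow> unpad b = b"
  by (cases b) (auto simp: is_ord_def unpad_Cons)

lemma unpad_pad [simp]: "is_ord b \<Longrightarrow> unpad (pad n b) = b"
  by (simp add: pad_def unpad_is_ord)

lemma is_ord_unpad [simp]: "is_ord (unpad xs)"
proof (induct xs)
  case Nil then show ?case by (simp add: is_ord_def)
next
  case (Cons a xs) then show ?case by (cases "a = 0") (auto simp: is_ord_def unpad_Cons)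
qed

lemma length_unpad: "length (unpad xs) \<le> length xs"
  by (simp add: unpad_def length_dropWhile_le)

lemma pad_length_unpad: "pad (length xs) (unpad xs) = xs"
proof (induct xs)
  case Nil then show ?case by (simp add: pad_def)
next
  case (Cons c xs)
  show ?case
  proof (cases "c = 0")
    case True
    have l: "length (unpad xs) \<le> length xs" by (rule length_unpad)
    have "pad (length (c # xs)) (unpad (c # xs)) = 0 # pad (length xs) (unpad xs)"
      using True l by (simp add: pad_def Suc_diff_le)
    thus ?thesis using Cons True by simp
  next
    case False thus ?thesis by (simp add: unpad_Cons pad_def)
  qed
qed

lemma pad_split: "length a \<le> m \<Longrightarrow> m \<le> n \<Longrightarrow> pad n a = replicate (n - m) 0 @ pad m a"
  by (simp add: pad_def replicate_add[symmetric])

lemma pad_less_pad_if_shorter: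
  assumes a: "is_ord a" and b: "is_ord b" and lab: "length a < length b" and bn: "length b \<le> n"
  shows "pad n a < pad n b"
proof -
  obtain y ys where yb: "b = y # ys" using lab by (cases b) auto
  have y: "y \<noteq> 0" using b yb by (simp add: is_ord_def)
  have "pad n a = replicate (n - length b) 0 @ pad (length b) a" using lab bn
    by (intro pad_split) auto
  moreover have "pad (length b) a = 0 # replicate (length b - length a - 1) 0 @ a"
    using lab by (simp add: pad_def) (metis Suc_diff_Suc replicate_Suc zero_less_diff)
  moreover have "pad n b = replicate (n - length b) 0 @ y # ys" by (simp add: pad_def yb)
  ultimately show ?thesis using y by simp
qed

lemma olt_iff_pad_less:
  assumes a: "is_ord a" and b: "is_ord b" and an: "length a \<le> n" and bn: "length b \<le> n"
  shows "olt a b \<longleftrightarrow> pad n a < pad n b"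
proof (cases "length a < length b")
  case True thus ?thesis using pad_less_pad_if_shorter[OF a b True bn] by (simp add: olt_conv)
next
  case False
  show ?thesis
  proof (cases "length a = length b")
    case True thus ?thesis by (simp add: olt_conv pad_def)
  next
    case False
    hence "length b < length a" using \<open>\<not> length a < length b\<close> by simp
    hence "pad n b < pad n a" using pad_less_pad_if_shorter[OF b a _ an] by simp
    thus ?thesis using less_not_sym \<open>length b < length a\<close> by (auto simp: olt_conv)
  qed
qed

lemma not_less_zeros: "length (r::nat list) = m \<Longrightarrow> \<not> r < replicate m 0"
  by (induct r arbitrary: m) auto

lemma zeros_le: "length (r::nat list) = m \<Longrightarrow> replicate m 0 \<le> r"
  using not_less_zeros[of r m] by (simp add: not_less)

lemma odom_omega_pow: "b \<in> odom (omega_pow n) \<longleftrightarrow> is_ord b \<and> length b \<le> n"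
proof -
  have "olt b (omega_pow n) \<longleftrightarrow> length b \<le> n" if ob: "is_ord b"
  proof (cases "length b = Suc n")
    case True
    then obtain c r where cr: "b = c # r" "length r = n" by (cases b) auto
    have "c \<noteq> 0" using ob cr by (simp add: is_ord_def)
    hence "\<not> b < omega_pow n" using cr not_less_zeros[of r n] by (simp add: omega_pow_def)
    thus ?thesis using True by (simp add: olt_conv omega_pow_def)
  next
    case False thus ?thesis by (auto simp: olt_conv omega_pow_def)
  qed
  thus ?thesis by (auto simp: odom_def)
qed

lemma length_omega_pow [simp]: "length (omega_pow n) = Suc n"
  by (simp add: omega_pow_def)

lemma is_ord_omega_pow [simp]: "is_ord (omega_pow n)"
  by (simp add: omega_pow_def is_ord_def)

lemma olt_omega_pow_iff: "olt (omega_pow h) (omega_pow n) \<longleftrightarrow> h < n"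
  by (auto simp: olt_conv omega_pow_def)

lemma pad_unpad [simp]: "length xs = n \<Longrightarrow> pad n (unpad xs) = xs"
  using pad_length_unpad by blast

lemma oadd_Nil2 [simp]: "oadd d [] = d" by (simp add: oadd_def)

lemma oadd_Nil1: "oadd [] i = i" by (simp add: oadd_def)

lemma oadd_is_ord_length:
  assumes d: "is_ord d" and i: "is_ord i"
  shows "is_ord (oadd d i) \<and> length (oadd d i) = max (length d) (length i)"
proof (cases "i = []")
  case True thus ?thesis using d by simp
next
  case False
  then obtain a r where ar: "i = a # r" by (cases i) auto
  have a: "a \<noteq> 0" using i ar by (simp add: is_ord_def)
  show ?thesis
  proof (cases "length d < length i")
    case True thus ?thesis using i ar by (simp add: oadd_def)
  next
    case False
    hence le: "length i \<le> length d" by simp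
    have eq: "oadd d i = take (length d - length i) d @ [d ! (length d - length i) + a] @ r"
      using False ar by (simp add: oadd_def)
    have len: "length (oadd d i) = length d" using le ar by (subst eq) simp
    have "is_ord (oadd d i)"
    proof (cases "length d - length i = 0")
      case True thus ?thesis using a by (simp add: eq is_ord_def)
    next
      case False
      then obtain c d' where cd: "d = c # d'" using le by (cases d) auto
      have "c \<noteq> 0" using d cd by (simp add: is_ord_def)
      moreover obtain k where k: "length d - length i = Suc k" using False
        by (cases "length d - length i") auto
      moreover have "take (length d - length i) d = c # take k d'" using k cd by simp
      ultimately show ?thesis unfolding eq is_ord_def by simp
    qed
    thus ?thesis using len le by simp
  qed
qed

lemma oadd_omul:
  assumes r: "is_ord r" and rh: "length r \<le> h"
  shows "oadd (omul_nat (omega_pow h) k) r = (if k = 0 then r else k # pad h r)"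
proof (cases "k = 0")
  case True thus ?thesis by (simp add: omul_nat_def oadd_Nil1)
next
  case False
  hence om: "omul_nat (omega_pow h) k = k # replicate h 0" by (simp add: omul_nat_def omega_pow_def)
  show ?thesis
  proof (cases r)
    case Nil thus ?thesis using False by (simp add: om pad_def)
  next
    case (Cons a r')
    have "Suc h - length r = Suc (h - length r)" using rh by simp
    moreover have "h - length r < h" using rh Cons by simp
    ultimately show ?thesis using False Cons rh by (simp add: om oadd_def pad_def)
  qed
qed

lemma pad_oadd_Cons:
  assumes d: "is_ord d" and dn: "length d \<le> n" and a: "0 < a" and n: "Suc (t + length r) = n"
  shows "pad n (oadd d (a # r)) = take t (pad n d) @ (pad n d ! t + a) # r"
proof (cases "length d < Suc (length r)")
  case True
  hence "oadd d (a # r) = a # r" by (simp add: oadd_def)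
  moreover have tl: "t < n - length d" using True n by simp
  moreover have "take t (pad n d) = replicate t 0" "pad n d ! t = 0"
    using tl by (simp_all add: pad_def nth_append)
  ultimately show ?thesis using n by (simp add: pad_def)
next
  case False
  hence eq: "oadd d (a # r) =
      take (length d - Suc (length r)) d @ [d ! (length d - Suc (length r)) + a] @ r"
    by (simp add: oadd_def)
  have l1: "t - (n - length d) = length d - Suc (length r)" using n False dn by simp
  have l2: "n - length d \<le> t" using n False dn by simp
  have "take t (pad n d) = replicate (n - length d) 0 @ take (length d - Suc (length r)) d"
    using l1 l2 by (simp add: pad_def)
  moreover have "pad n d ! t = d ! (length d - Suc (length r))"
    using l1 l2 by (simp add: pad_def nth_append)
  moreover have "length (oadd d (a # r)) = length d"
    using oadd_is_ord_length[OF d, of "a # r"] a False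
    by (simp add: is_ord_def)
  ultimately show ?thesis by (simp add: pad_def eq)
qed

definition oadd_digits :: "nat \<Rightarrow> nat list \<Rightarrow> nat list \<Rightarrow> nat list" where
  "oadd_digits n d xs = pad n (oadd d (unpad xs))"

lemma first_nonzero_digit:
  "(xs::nat list) \<noteq> replicate (length xs) 0 \<Longrightarrow> \<exists>t a r. xs = replicate t 0 @ a # r \<and> 0 < a"
proof (induct xs)
  case Nil thus ?case by simp
next
  case (Cons c xs)
  show ?case
  proof (cases "c = 0")
    case True
    with Cons obtain t a r where "xs = replicate t 0 @ a # r" "0 < a" by auto
    thus ?thesis using True by (metis append_Cons replicate_Suc)
  next
    case False
    have "c # xs = replicate 0 0 @ c # xs \<and> 0 < c" using False by simp
    thus ?thesis by blast
  qed
qed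

lemma unpad_decomp: "0 < a \<Longrightarrow> unpad (replicate t 0 @ a # r) = a # r"
  by (simp add: unpad_Cons)

lemma unpad_zeros [simp]: "unpad (replicate t 0) = []"
  using unpad_replicate_append[of t "[]"] by simp

lemma oadd_digits_zeros: "is_ord d \<Longrightarrow> length d \<le> n \<Longrightarrow> oadd_digits n d (replicate m 0) = pad n d"
  by (simp add: oadd_digits_def)

lemma oadd_digits_nonzero:
  assumes d: "is_ord d" and dn: "length d \<le> n" and a: "0 < a"
    and n: "length (replicate t 0 @ a # r) = n"
  shows "oadd_digits n d (replicate t 0 @ a # r) = take t (pad n d) @ (pad n d ! t + a) # r"
  unfolding oadd_digits_def unpad_decomp[OF a] by (rule pad_oadd_Cons[OF d dn a]) (use n in simp)

lemma length_oadd_digits: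
  assumes d: "is_ord d" and dn: "length d \<le> n" and xs: "length xs = n"
  shows "length (oadd_digits n d xs) = n"
proof -
  have "length (oadd d (unpad xs)) \<le> n"
    using oadd_is_ord_length[OF d is_ord_unpad[of xs]] dn length_unpad[of xs] xs by simp
  thus ?thesis by (simp add: oadd_digits_def)
qed

lemma is_ord_oadd_unpad:
  assumes d: "is_ord d"
  shows "is_ord (oadd d (unpad xs))"
  using oadd_is_ord_length[OF d is_ord_unpad] by simp

lemma pad_less_oadd_digits:
  assumes d: "is_ord d" and dn: "length d \<le> n" and xs: "length xs = n" and nz: "xs \<noteq> replicate n 0"
  shows "pad n d < oadd_digits n d xs"
proof -
  obtain t a r where tar: "xs = replicate t 0 @ a # r" "0 < a" using first_nonzero_digit nz xs
    by blast
  have tn: "t < n" using xs tar by simp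
  have p: "oadd_digits n d xs = take t (pad n d) @ (pad n d ! t + a) # r"
    using oadd_digits_nonzero[OF d dn tar(2)] xs tar by simp
  define D where "D = pad n d"
  have De: "D = take t D @ D ! t # drop (Suc t) D" using tn dn unfolding D_def
    by (intro id_take_nth_drop) simp
  have "(take t D @ D ! t # drop (Suc t) D) < (take t D @ (D ! t + a) # r)" using tar(2) by simp
  hence "D < (take t D @ (D ! t + a) # r)" using De by simp
  thus ?thesis using p by (simp add: D_def)
qed

lemma take_lt_split: "t' < t \<Longrightarrow> t \<le> length D \<Longrightarrow> \<exists>w. take t D = take t' D @ D ! t' # w"
proof -
  assume a: "t' < t" "t \<le> length D"
  have "take t D = take t' D @ drop t' (take t D)" using a
    by (metis append_take_drop_id min.absorb1 order.strict_implies_order take_take)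
  moreover have "drop t' (take t D) = D ! t' # drop (Suc t') (take t D)" using a
    by (metis Cons_nth_drop_Suc length_take min.absorb2 nth_take order.strict_trans2
        order.strict_implies_order)
  ultimately show ?thesis by auto
qed

lemma oadd_digits_strict_mono:
  assumes d: "is_ord d" and dn: "length d \<le> n"
    and xs: "length xs = n" and ys: "length ys = n" and xy: "xs < ys"
  shows "oadd_digits n d xs < oadd_digits n d ys"
proof (cases "xs = replicate n 0")
  case True
  have "ys \<noteq> replicate n 0" using True xy by auto
  thus ?thesis using True pad_less_oadd_digits[OF d dn ys] oadd_digits_zeros[OF d dn] by simp
next
  case False
  obtain t a r where x: "xs = replicate t 0 @ a # r" "0 < a" using first_nonzero_digit False xs
    by blast
  have ynz: "ys \<noteq> replicate n 0" using xy not_less_zeros[OF xs] by auto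
  obtain t' a' r' where y: "ys = replicate t' 0 @ a' # r'" "0 < a'" using first_nonzero_digit ynz ys
    by blast
  have px: "oadd_digits n d xs = take t (pad n d) @ (pad n d ! t + a) # r"
    using oadd_digits_nonzero[OF d dn x(2)] xs x by simp
  have py: "oadd_digits n d ys = take t' (pad n d) @ (pad n d ! t' + a') # r'"
    using oadd_digits_nonzero[OF d dn y(2)] ys y by simp
  have lp: "length (pad n d) = n" using dn by simp
  consider "t < t'" | "t' < t" | "t = t'" by linarith
  thus ?thesis
  proof cases
    case 1
    have "ys = replicate t 0 @ 0 # replicate (t' - t - 1) 0 @ a' # r'"
      using 1 y
      by (simp add: replicate_add[symmetric])
        (metis Suc_diff_Suc append_Cons replicate_Suc replicate_add zero_less_diff
          add_diff_inverse_nat less_imp_le_nat not_less)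
    hence False using xy x by simp
    thus ?thesis ..
  next
    case 2
    have "t \<le> length (pad n d)" using lp xs x by simp
    then obtain w where "take t (pad n d) = take t' (pad n d) @ pad n d ! t' # w"
      using take_lt_split[OF 2] by blast
    thus ?thesis using px py y(2) by simp
  next
    case 3
    hence "a # r < a' # r'" using xy x y by simp
    thus ?thesis using px py 3 by auto
  qed
qed

lemma less_same_length_decomp:
  "length X = length Y \<Longrightarrow> X < Y \<Longrightarrow> \<exists>u x y X' Y'. X = u @ x # X' \<and> Y = u @ y # Y' \<and> x < y"
proof (induct X arbitrary: Y)
  case Nil thus ?case by simp
next
  case (Cons a X)
  then obtain b Y1 where Y: "Y = b # Y1" by (cases Y) auto
  show ?case
  proof (cases "a < b")
    case True thus ?thesis using Y by (metis append.left_neutral)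
  next
    case False
    hence ab: "a = b \<and> X < Y1" using Cons Y by simp
    have lX: "length X = length Y1" using Cons.prems(1) Y by simp
    obtain u x y X' Y' where "X = u @ x # X'" "Y1 = u @ y # Y'" "x < y" using Cons.hyps[OF lX] ab
      by blast
    thus ?thesis using Y \<open>a = b \<and> X < Y1\<close> by (metis append_Cons)
  qed
qed

lemma oadd_digits_surj:
  assumes d: "is_ord d" and dn: "length d \<le> n" and Y: "length Y = n" and DY: "pad n d \<le> Y"
  shows "\<exists>xs. length xs = n \<and> oadd_digits n d xs = Y"
proof (cases "Y = pad n d")
  case True thus ?thesis using oadd_digits_zeros[OF d dn, of n] by (metis length_replicate)
next
  case False
  hence lt: "pad n d < Y" using DY by (simp add: le_less)
  obtain u x y X' Y' where dec: "pad n d = u @ x # X'" "Y = u @ y # Y'" "x < y"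
    using less_same_length_decomp[OF _ lt] Y dn by auto
  define xs where "xs = replicate (length u) 0 @ (y - x) # Y'"
  have lxs: "length xs = n" using Y dec by (simp add: xs_def)
  have "oadd_digits n d xs = take (length u) (pad n d) @ (pad n d ! length u + (y - x)) # Y'"
    using oadd_digits_nonzero[OF d dn, of "y - x" "length u" Y'] dec lxs by (simp add: xs_def)
  also have "\<dots> = Y" using dec by simp
  finally show ?thesis using lxs by blast
qed

lemma oadd_digits_inj:
  assumes d: "is_ord d" "length d \<le> n" and xs: "length xs = n" and ys: "length ys = n"
    and eq: "oadd_digits n d xs = oadd_digits n d ys"
  shows "xs = ys"
  using oadd_digits_strict_mono[OF d xs ys] oadd_digits_strict_mono[OF d ys xs] eq
    less_linear[of xs ys] by auto

lemma oadd_left_cancel: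
  assumes d: "is_ord d" and g: "is_ord g" "is_ord g'" and eq: "oadd d g = oadd d g'"
  shows "g = g'"
proof -
  define n where "n = length (oadd d g)"
  have n: "length d \<le> n" "length g \<le> n" "length g' \<le> n"
    using oadd_is_ord_length[OF d g(1)] oadd_is_ord_length[OF d g(2)] eq by (simp_all add: n_def)
  have "oadd_digits n d (pad n g) = oadd_digits n d (pad n g')"
    using eq g by (simp add: oadd_digits_def)
  then have "pad n g = pad n g'" using oadd_digits_inj[OF d n(1)] n(2,3) by simp
  then show ?thesis using g by (metis unpad_pad)
qed

lemma oadd_omega_pow: "length d \<le> n \<Longrightarrow> oadd d (omega_pow n) = omega_pow n"
  by (simp add: oadd_def omega_pow_def)

lemma less_oadd_digits_omega_pow:
  assumes xs: "length xs = Suc m"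
  shows "xs < (oadd_digits (Suc m) (omega_pow m) xs)"
proof (cases "xs = replicate (Suc m) 0")
  case True
  thus ?thesis using oadd_digits_zeros[of "omega_pow m" "Suc m" "Suc m"]
    by (simp add: pad_def omega_pow_def is_ord_def)
next
  case False
  obtain t a r where x: "xs = replicate t 0 @ a # r" "0 < a"
    using first_nonzero_digit[of xs] False xs by auto
  have p: "oadd_digits (Suc m) (omega_pow m) xs =
      take t (pad (Suc m) (omega_pow m)) @ (pad (Suc m) (omega_pow m) ! t + a) # r"
    using oadd_digits_nonzero[of "omega_pow m" "Suc m" a t r] x xs by simp
  have pd: "pad (Suc m) (omega_pow m) = 1 # replicate m 0" by (simp add: pad_def omega_pow_def)
  show ?thesis
  proof (cases t)
    case 0 thus ?thesis using p pd x by simp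
  next
    case (Suc t') thus ?thesis using p pd x by simp
  qed
qed

lemma omega_pow_oadd_shorter:
  assumes a: "is_ord a" "length a = Suc m" "a \<noteq> omega_pow m"
  shows "olt (omega_pow m) a" and "\<exists>g. is_ord g \<and> oadd (omega_pow m) g = a \<and> olt g a"
proof -
  let ?d = "omega_pow m"
  obtain c r where cr: "a = c # r" "length r = m" using a(2) by (cases a) auto
  have "c \<noteq> 0" using a(1) cr by (simp add: is_ord_def)
  have "?d < a"
  proof (cases "c = 1")
    case True
    then have "r \<noteq> replicate m 0" using a(3) cr by (simp add: omega_pow_def)
    then have "replicate m 0 < r" using zeros_le[OF cr(2)] by (simp add: le_less)
    thus ?thesis using True cr by (simp add: omega_pow_def)
  next
    case False
    then show ?thesis using \<open>c \<noteq> 0\<close> cr by (simp add: omega_pow_def)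
  qed
  then show "olt ?d a" using a(2) by (simp add: olt_conv)
  have pads: "pad (Suc m) ?d = ?d" "pad (Suc m) a = a" using a(2) by (simp_all add: pad_def)
  obtain xs where xs: "length xs = Suc m" "oadd_digits (Suc m) ?d xs = a"
    using oadd_digits_surj[of ?d "Suc m" a] a(2) pads \<open>?d < a\<close> by (auto simp: le_less)
  define g where "g = unpad xs"
  have "oadd ?d g = unpad (pad (Suc m) (oadd ?d g))"
    using is_ord_oadd_unpad[of ?d xs] by (simp add: g_def)
  also have "\<dots> = a" using xs(2) a(1) by (simp add: oadd_digits_def g_def unpad_is_ord)
  finally have g: "oadd ?d g = a" .
  have "xs < a" using less_oadd_digits_omega_pow[OF xs(1)] xs(2) by simp
  then have "olt g a"
    using olt_iff_pad_less[of g a "Suc m"] a length_unpad[of xs] xs(1) pads(2) by (simp add: g_def)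
  with g show "\<exists>g. is_ord g \<and> oadd ?d g = a \<and> olt g a" using is_ord_unpad g_def
    by blast
qed

lemma olt_trans: "olt x y \<Longrightarrow> olt y z \<Longrightarrow> olt x z"
  unfolding olt_def using lenlex_trans trans_less_than by blast

text \<open>A strictly increasing map from the ordinals below a into those below a smaller g
  would send g below itself, and iterating gives an infinite descending chain.\<close>

lemma no_increasing_map_into_smaller:
  assumes g: "is_ord g" and ga: "olt g a"
    and f1: "\<forall>i\<in>odom a. f i \<in> odom g" and f2: "\<forall>i\<in>odom a. \<forall>j\<in>odom a. olt i j \<longrightarrow> olt (f i) (f j)"
  shows False
proof -
  have sub: "odom g \<subseteq> odom a" using ga olt_trans by (auto simp: odom_def)
  have claim: "x \<in> odom a \<longrightarrow> \<not> olt (f x) x" for x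
  proof (induct x rule: wf_induct_rule[OF wf_lenlex[OF wf_less_than]])
    case (1 x)
    show ?case
    proof (intro impI notI)
      assume x: "x \<in> odom a" and fx: "olt (f x) x"
      have y: "f x \<in> odom a" using f1 x sub by blast
      have "olt (f (f x)) (f x)" using f2 y x fx by blast
      moreover have "(f x, x) \<in> lenlex less_than" using fx by (simp add: olt_def)
      ultimately show False using 1 y by blast
    qed
  qed
  have g_in: "g \<in> odom a" using g ga by (simp add: odom_def)
  hence "olt (f g) g" using f1 by (simp add: odom_def)
  thus False using claim g_in by blast
qed

section \<open>Transfinite sequences of length omega^n as labelled sets\<close>

definition digit_labels :: "'q tseq \<Rightarrow> nat list \<Rightarrow> 'q" where
  "digit_labels s = (\<lambda>xs. seq_at s (unpad xs))"

definition seq_lset :: "'q tseq \<Rightarrow> 'q lset" where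
  "seq_lset s = omega_seq (length (seq_len s) - 1) (digit_labels s)"

lemma seq_lset_omega_pow [simp]:
  "seq_len s = omega_pow n \<Longrightarrow> seq_lset s = omega_seq n (digit_labels s)"
  by (simp add: seq_lset_def)

lemma emb_imp_embeds:
  assumes sn: "seq_len s = omega_pow n" and tm: "seq_len t = omega_pow m" and "emb s t"
  shows "embeds (seq_lset s) (seq_lset (t :: ('q::preorder) tseq))"
proof -
  obtain f where f1: "\<forall>i\<in>odom (seq_len s). f i \<in> odom (seq_len t) \<and> seq_at s i \<le> seq_at t (f i)"
    and f2: "\<forall>i\<in>odom (seq_len s). \<forall>j\<in>odom (seq_len s). olt i j \<longrightarrow> olt (f i) (f j)"
    using \<open>emb s t\<close> unfolding emb_def by blast
  have u: "unpad xs \<in> odom (seq_len s)" if "length xs = n" for xs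
    using sn that length_unpad[of xs] by (simp add: odom_omega_pow)
  have fu: "is_ord (f (unpad xs)) \<and> length (f (unpad xs)) \<le> m" if "length xs = n" for xs
    using f1 u[OF that] tm by (simp add: odom_omega_pow)
  have "embedding (\<lambda>xs. pad m (f (unpad xs))) (seq_lset s) (seq_lset t)"
  proof (rule embeddingI)
    fix xs assume "xs \<in> fst (seq_lset s)"
    hence xs: "length xs = n" using sn by simp
    show "pad m (f (unpad xs)) \<in> fst (seq_lset t)" using fu[OF xs] tm by simp
    show "snd (seq_lset s) xs \<le> snd (seq_lset t) (pad m (f (unpad xs)))"
      using f1 u[OF xs] fu[OF xs] sn tm by (simp add: digit_labels_def)
  next
    fix xs ys assume "xs \<in> fst (seq_lset s)" "ys \<in> fst (seq_lset s)" and xy: "xs < ys"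
    hence xs: "length xs = n" and ys: "length ys = n" using sn by auto
    have "olt (unpad xs) (unpad ys)"
      using olt_iff_pad_less[OF is_ord_unpad is_ord_unpad, of xs n ys] length_unpad[of xs]
        length_unpad[of ys] xs ys xy
      by simp
    hence "olt (f (unpad xs)) (f (unpad ys))" using f2 u[OF xs] u[OF ys] by blast
    thus "pad m (f (unpad xs)) < pad m (f (unpad ys))"
      using olt_iff_pad_less fu[OF xs] fu[OF ys] by blast
  qed
  thus ?thesis unfolding embeds_def by blast
qed

lemma embeds_imp_emb:
  assumes sn: "seq_len s = omega_pow n" and tm: "seq_len t = omega_pow m"
    and "embeds (seq_lset s) (seq_lset (t :: ('q::preorder) tseq))"
  shows "emb s t"
proof -
  obtain g where g: "embedding g (seq_lset s) (seq_lset t)"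
    using \<open>embeds (seq_lset s) (seq_lset t)\<close> unfolding embeds_def by blast
  have gl: "length (g xs) = m" if "length xs = n" for xs using embeddingD(1)[OF g] that sn tm
    by simp
  define f where "f b = unpad (g (pad n b))" for b
  have "f i \<in> odom (seq_len t) \<and> seq_at s i \<le> seq_at t (f i)" if "i \<in> odom (seq_len s)" for i
  proof -
    have i: "is_ord i" "length i \<le> n" using sn that by (simp_all add: odom_omega_pow)
    have pl: "length (pad n i) = n" using i by simp
    have "f i \<in> odom (seq_len t)"
      using tm gl[OF pl] length_unpad[of "g (pad n i)"] by (simp add: f_def odom_omega_pow)
    moreover have "seq_at s i \<le> seq_at t (f i)"
      using embeddingD(2)[OF g, of "pad n i"] pl i sn tm by (simp add: digit_labels_def f_def)
    ultimately show ?thesis by blast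
  qed
  moreover have "olt (f i) (f j)" if "i \<in> odom (seq_len s)" "j \<in> odom (seq_len s)" "olt i j" for i j
  proof -
    have i: "is_ord i" "length i \<le> n" and j: "is_ord j" "length j \<le> n"
      using sn that by (simp_all add: odom_omega_pow)
    have "pad n i < pad n j" using olt_iff_pad_less[OF i(1) j(1) i(2) j(2)] that(3) by simp
    hence "g (pad n i) < g (pad n j)" using embeddingD(3)[OF g] i j sn by simp
    moreover have "length (g (pad n i)) = m" "length (g (pad n j)) = m" using gl i j by simp_all
    ultimately show "olt (f i) (f j)"
      using olt_iff_pad_less[OF is_ord_unpad is_ord_unpad, of "g (pad n i)" m "g (pad n j)"]
        length_unpad[of "g (pad n i)"] length_unpad[of "g (pad n j)"]
      by (simp add: f_def)
  qed
  ultimately show "emb s t" unfolding emb_def by blast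
qed

lemma emb_iff_embeds:
  "seq_len s = omega_pow n \<Longrightarrow> seq_len t = omega_pow m \<Longrightarrow>
    emb s t \<longleftrightarrow> embeds (seq_lset s) (seq_lset (t :: ('q::preorder) tseq))"
  using emb_imp_embeds embeds_imp_emb by blast

lemma seq_range_eq:
  assumes sn: "seq_len s = omega_pow n"
  shows "seq_range s = digit_labels s ` positions n"
proof
  show "seq_range s \<subseteq> digit_labels s ` positions n"
  proof
    fix x assume "x \<in> seq_range s"
    then obtain b where b: "b \<in> odom (seq_len s)" "x = seq_at s b" by (auto simp: seq_range_def)
    hence "is_ord b" "length b \<le> n" using sn by (simp_all add: odom_omega_pow)
    hence "x = digit_labels s (pad n b) \<and> pad n b \<in> positions n" using b
      by (simp add: digit_labels_def)
    thus "x \<in> digit_labels s ` positions n" by blast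
  qed
  show "digit_labels s ` positions n \<subseteq> seq_range s"
  proof
    fix x assume "x \<in> digit_labels s ` positions n"
    then obtain xs where xs: "length xs = n" "x = digit_labels s xs" by blast
    have "unpad xs \<in> odom (seq_len s)" using sn xs length_unpad[of xs]
      by (simp add: odom_omega_pow)
    thus "x \<in> seq_range s" using xs by (auto simp: seq_range_def digit_labels_def)
  qed
qed

lemma seq_len_seq_tail:
  assumes "is_ord d" "is_ord g" "seq_len s = oadd d g"
  shows "seq_len (seq_tail s d) = g"
proof -
  have "(THE g. is_ord g \<and> oadd d g = seq_len s) = g"
    using assms oadd_left_cancel by (intro the_equality) auto
  thus ?thesis by (simp add: seq_tail_def seq_len_def)
qed

lemma seq_len_seq_tail_omega_pow:
  assumes sn: "seq_len s = omega_pow n" and d: "is_ord d" "length d \<le> n"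
  shows "seq_len (seq_tail s d) = omega_pow n"
  by (rule seq_len_seq_tail[OF d(1) is_ord_omega_pow]) (simp add: sn oadd_omega_pow[OF d(2)])

lemma seq_lset_seq_tail:
  assumes sn: "seq_len s = omega_pow n" and d: "is_ord d" "length d \<le> n"
  shows "seq_lset (seq_tail s d) = omega_seq n (digit_labels s \<circ> oadd_digits n d)"
proof -
  have "seq_len (seq_tail s d) = omega_pow n" using seq_len_seq_tail_omega_pow[OF sn d] .
  moreover have "digit_labels (seq_tail s d) = digit_labels s \<circ> oadd_digits n d"
    using is_ord_oadd_unpad[OF d(1)]
    by (auto simp: digit_labels_def oadd_digits_def seq_tail_def seq_at_def)
  ultimately show ?thesis by simp
qed

text \<open>Adding d to the ordinals below omega^n maps them monotonically onto those at
  least d, so on positions the tail from d is a relabelling of the final segment from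
  \<open>pad n d\<close>.\<close>

lemma omega_seq_oadd_digits_lequiv_ltail:
  assumes d: "is_ord d" "length d \<le> n"
  shows "lequiv (omega_seq n (l \<circ> oadd_digits n d)) (ltail (omega_seq n l) (pad n d))"
proof
  have "embedding (oadd_digits n d)
      (omega_seq n (l \<circ> oadd_digits n d)) (ltail (omega_seq n l) (pad n d))"
  proof (rule embeddingI)
    fix xs assume "xs \<in> fst (omega_seq n (l \<circ> oadd_digits n d))"
    then have xs: "length xs = n" by simp
    have "pad n d \<le> oadd_digits n d xs"
      using pad_less_oadd_digits[OF d xs] oadd_digits_zeros[OF d]
      by (cases "xs = replicate n 0") auto
    then show "oadd_digits n d xs \<in> fst (ltail (omega_seq n l) (pad n d))"
      using length_oadd_digits[OF d xs] by simp
  qed (use oadd_digits_strict_mono[OF d] in auto)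
  then show "embeds (omega_seq n (l \<circ> oadd_digits n d)) (ltail (omega_seq n l) (pad n d))"
    unfolding embeds_def by blast
next
  define inv where "inv ys = (SOME xs. length xs = n \<and> oadd_digits n d xs = ys)" for ys
  have inv: "length (inv ys) = n \<and> oadd_digits n d (inv ys) = ys"
    if "length ys = n" "pad n d \<le> ys" for ys
    unfolding inv_def by (rule someI_ex) (use oadd_digits_surj[OF d] that in simp)
  have "embedding inv (ltail (omega_seq n l) (pad n d)) (omega_seq n (l \<circ> oadd_digits n d))"
  proof (rule embeddingI)
    fix ys zs assume ys: "ys \<in> fst (ltail (omega_seq n l) (pad n d))"
    then show "inv ys \<in> fst (omega_seq n (l \<circ> oadd_digits n d))"
      "snd (ltail (omega_seq n l) (pad n d)) ys \<le> snd (omega_seq n (l \<circ> oadd_digits n d)) (inv ys)"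
      using inv by simp_all
    assume zs: "zs \<in> fst (ltail (omega_seq n l) (pad n d))" and "ys < zs"
    have iy: "length (inv ys) = n" "oadd_digits n d (inv ys) = ys" using inv ys by simp_all
    have iz: "length (inv zs) = n" "oadd_digits n d (inv zs) = zs" using inv zs by simp_all
    show "inv ys < inv zs"
    proof (rule ccontr)
      assume "\<not> inv ys < inv zs"
      then have "inv zs < inv ys \<or> inv zs = inv ys" by auto
      then have "zs \<le> ys" using oadd_digits_strict_mono[OF d iz(1) iy(1)] iy(2) iz(2) by auto
      with \<open>ys < zs\<close> show False by simp
    qed
  qed
  then show "embeds (ltail (omega_seq n l) (pad n d)) (omega_seq n (l \<circ> oadd_digits n d))"
    unfolding embeds_def by blast
qed

lemma indecomposable_imp_lindec:
  assumes sn: "seq_len s = omega_pow n" and ind: "indecomposable (s :: ('q::preorder) tseq)"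
  shows "lindec (seq_lset s)"
  unfolding lindec_def
proof
  fix x assume "x \<in> fst (seq_lset s)"
  then have x: "length x = n" using sn by simp
  show "embeds (seq_lset s) (ltail (seq_lset s) x)"
  proof (cases "unpad x = []")
    case True
    then have "x = replicate n 0" using pad_unpad[OF x] by (simp add: pad_def)
    then show ?thesis using sn by (intro embeds_subset) (auto simp: zeros_le)
  next
    case False
    define d where "d = unpad x"
    have d: "is_ord d" "d \<noteq> []" "length d \<le> n" using False x length_unpad[of x]
      by (simp_all add: d_def)
    have "olt d (seq_len s)" using d sn odom_omega_pow[of d n] by (simp add: odom_def)
    then have "emb s (seq_tail s d)" using ind d unfolding indecomposable_def by blast
    then have "embeds (seq_lset s) (seq_lset (seq_tail s d))"
      by (rule emb_imp_embeds[OF sn seq_len_seq_tail_omega_pow[OF sn d(1,3)]])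
    moreover have "pad n d = x" using x by (simp add: d_def)
    ultimately show ?thesis
      using omega_seq_oadd_digits_lequiv_ltail[OF d(1,3), of "digit_labels s"]
      unfolding seq_lset_seq_tail[OF sn d(1,3)] seq_lset_omega_pow[OF sn]
      by (blast intro: embeds_trans)
  qed
qed

lemma lindec_imp_indecomposable:
  assumes sn: "seq_len s = omega_pow n" and ind: "lindec (seq_lset (s :: ('q::preorder) tseq))"
  shows "indecomposable s"
  unfolding indecomposable_def
proof (intro allI impI)
  fix d assume "is_ord d \<and> d \<noteq> [] \<and> olt d (seq_len s)"
  then have d: "is_ord d" "length d \<le> n" using sn odom_omega_pow[of d n]
    by (auto simp: odom_def)
  have "embeds (seq_lset s) (ltail (seq_lset s) (pad n d))"
    using ind d sn unfolding lindec_def by simp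
  then have "embeds (seq_lset s) (seq_lset (seq_tail s d))"
    using omega_seq_oadd_digits_lequiv_ltail[OF d, of "digit_labels s"]
    unfolding seq_lset_seq_tail[OF sn d] seq_lset_omega_pow[OF sn]
    by (blast intro: embeds_trans)
  then show "emb s (seq_tail s d)"
    by (rule embeds_imp_emb[OF sn seq_len_seq_tail_omega_pow[OF sn d]])
qed

lemma indecomposable_iff_lindec:
  "seq_len s = omega_pow n \<Longrightarrow> indecomposable (s :: ('q::preorder) tseq) \<longleftrightarrow> lindec (seq_lset s)"
  using indecomposable_imp_lindec lindec_imp_indecomposable by blast

text \<open>If |s| is not a power omega^m with m + 1 digits, then |s| = omega^m + g with g < |s|,
  and s cannot embed into its tail of length g.\<close>

lemma indecomposable_length:
  assumes "valid_seq s" and ind: "indecomposable (s :: ('q::preorder) tseq)"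
  obtains n where "seq_len s = omega_pow n"
proof (rule ccontr)
  assume not_pow: "\<not> thesis"
  define a where "a = seq_len s"
  have a: "is_ord a" "a \<noteq> []" using assms(1) by (simp_all add: valid_seq_def a_def)
  define m where "m = length a - 1"
  have la: "length a = Suc m" using a by (simp add: m_def)
  have "a \<noteq> omega_pow m" using not_pow that unfolding a_def by blast
  then obtain g where g: "is_ord g" "oadd (omega_pow m) g = a" "olt g a"
    using omega_pow_oadd_shorter(2)[OF a(1) la] by blast
  have "olt (omega_pow m) a"
    using omega_pow_oadd_shorter(1)[OF a(1) la] \<open>a \<noteq> omega_pow m\<close> .
  then have "emb s (seq_tail s (omega_pow m))"
    using ind unfolding indecomposable_def a_def by (simp add: omega_pow_def is_ord_def)
  moreover have "seq_len (seq_tail s (omega_pow m)) = g"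
    by (rule seq_len_seq_tail[OF is_ord_omega_pow g(1)]) (simp add: g(2) a_def)
  ultimately obtain f where "\<forall>i\<in>odom a. f i \<in> odom g"
    "\<forall>i\<in>odom a. \<forall>j\<in>odom a. olt i j \<longrightarrow> olt (f i) (f j)"
    unfolding emb_def a_def by auto
  then show False using no_increasing_map_into_smaller g(1,3) by blast
qed

lemma seq_len_omega_concat: "seq_len t = omega_pow h \<Longrightarrow> seq_len (omega_concat t) = omega_pow (Suc h)"
  by (simp add: omega_concat_def seq_len_def)

lemma digit_labels_omega_concat:
  assumes th: "seq_len t = omega_pow h" and v: "length v = h"
  shows "digit_labels (omega_concat t) (c # v) = digit_labels t v"
proof -
  have "(THE r. is_ord r \<and> olt r (seq_len t) \<and>
      (\<exists>k. unpad (c # v) = oadd (omul_nat (seq_len t) k) r))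
      = unpad v"
  proof (rule the_equality)
    have uv: "is_ord (unpad v)" "length (unpad v) \<le> h" using length_unpad[of v] v by auto
    have "olt (unpad v) (seq_len t)" using uv th odom_omega_pow[of "unpad v" h]
      by (simp add: odom_def)
    moreover have "unpad (c # v) = oadd (omul_nat (seq_len t) c) (unpad v)"
      using oadd_omul[OF uv] th v by (cases "c = 0") (simp_all add: unpad_Cons)
    ultimately show "is_ord (unpad v) \<and> olt (unpad v) (seq_len t) \<and>
        (\<exists>k. unpad (c # v) = oadd (omul_nat (seq_len t) k) (unpad v))"
      using uv by blast
  next
    fix r
    assume r: "is_ord r \<and> olt r (seq_len t) \<and> (\<exists>k. unpad (c # v) = oadd (omul_nat (seq_len t) k) r)"
    then obtain k where k: "unpad (c # v) = oadd (omul_nat (omega_pow h) k) r" using th by auto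
    have rl: "length r \<le> h" using r th odom_omega_pow[of r h] by (auto simp: odom_def)
    have "pad (Suc h) (oadd (omul_nat (omega_pow h) k) r) = k # pad h r"
      using oadd_omul[OF _ rl] r rl by (cases "k = 0") (simp_all add: pad_def Suc_diff_le)
    moreover have "pad (Suc h) (unpad (c # v)) = c # v" using v by simp
    ultimately have "v = pad h r" using k by simp
    thus "r = unpad v" using r by simp
  qed
  thus ?thesis by (simp add: digit_labels_def omega_concat_def seq_at_def)
qed

lemma emb_omega_concat_iff:
  assumes th: "seq_len t = omega_pow h" and sn: "seq_len s = omega_pow n"
  shows "emb (omega_concat t) s \<longleftrightarrow>
    embeds (lomega (seq_lset t)) (seq_lset (s :: ('q::preorder) tseq))"
proof -
  have "lequiv (seq_lset (omega_concat t)) (lomega (seq_lset t))"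
    using seq_len_omega_concat[OF th] digit_labels_omega_concat[OF th] th
    by (auto intro!: embeds_subset simp: mem_lomega length_Suc_conv)
  thus ?thesis using emb_iff_embeds[OF seq_len_omega_concat[OF th] sn] embeds_trans by blast
qed

definition seq_of_digits :: "nat \<Rightarrow> (nat list \<Rightarrow> 'q) \<Rightarrow> 'q tseq" where
  "seq_of_digits h r = (omega_pow h, \<lambda>b. r (pad h b))"

lemma seq_len_seq_of_digits [simp]: "seq_len (seq_of_digits h r) = omega_pow h"
  by (simp add: seq_of_digits_def seq_len_def)

lemma digit_labels_seq_of_digits: "length xs = h \<Longrightarrow> digit_labels (seq_of_digits h r) xs = r xs"
  by (simp add: seq_of_digits_def digit_labels_def seq_at_def)

lemma lequiv_seq_lset_seq_of_digits: "lequiv (seq_lset (seq_of_digits h r)) (omega_seq h r)"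
  by (auto intro!: embeds_subset simp: digit_labels_seq_of_digits)

lemma lindec_seq_lset_seq_of_digits:
  assumes "lindec (omega_seq h r)"
  shows "lindec (seq_lset (seq_of_digits h r))"
proof -
  note eq = digit_labels_seq_of_digits[of _ h r]
  show ?thesis
    unfolding lindec_def
  proof
    fix d assume d: "d \<in> fst (seq_lset (seq_of_digits h r))"
    have "embeds (omega_seq h r) (ltail (omega_seq h r) d)" using assms d by (simp add: lindec_def)
    moreover have "embeds (ltail (omega_seq h r) d) (ltail (seq_lset (seq_of_digits h r)) d)"
      by (rule embeds_subset) (auto simp: eq)
    ultimately show "embeds (seq_lset (seq_of_digits h r)) (ltail (seq_lset (seq_of_digits h r)) d)"
      using lequiv_seq_lset_seq_of_digits embeds_trans by blast
  qed
qed

section \<open>Cofinal factors and the map g\<close>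

lemma emb_trans:
  assumes st: "emb s t" and tu: "emb t (u :: ('q::preorder) tseq)"
  shows "emb s u"
proof -
  obtain f where f1: "\<forall>i\<in>odom (seq_len s). f i \<in> odom (seq_len t) \<and> seq_at s i \<le> seq_at t (f i)"
    and f2: "\<forall>i\<in>odom (seq_len s). \<forall>j\<in>odom (seq_len s). olt i j \<longrightarrow> olt (f i) (f j)"
    using st unfolding emb_def by blast
  obtain g where g1: "\<forall>i\<in>odom (seq_len t). g i \<in> odom (seq_len u) \<and> seq_at t i \<le> seq_at u (g i)"
    and g2: "\<forall>i\<in>odom (seq_len t). \<forall>j\<in>odom (seq_len t). olt i j \<longrightarrow> olt (g i) (g j)"
    using tu unfolding emb_def by blast
  have "\<forall>i\<in>odom (seq_len s). g (f i) \<in> odom (seq_len u) \<and> seq_at s i \<le> seq_at u (g (f i))"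
    using f1 g1 order_trans by metis
  moreover have "\<forall>i\<in>odom (seq_len s). \<forall>j\<in>odom (seq_len s). olt i j \<longrightarrow> olt (g (f i)) (g (f j))"
    using f1 f2 g2 by metis
  ultimately show ?thesis unfolding emb_def by (intro exI[of _ "\<lambda>i. g (f i)"]) blast
qed

lemma seq_equiv_sym: "seq_equiv s t \<Longrightarrow> seq_equiv t s"
  unfolding seq_equiv_def by blast

lemma seq_equiv_trans: "seq_equiv s t \<Longrightarrow> seq_equiv t u \<Longrightarrow> seq_equiv s (u :: ('q::preorder) tseq)"
  unfolding seq_equiv_def using emb_trans by blast

lemma factor_in_iF_ww: "r \<in> factors s \<Longrightarrow> r \<in> iF_ww"
  by (simp add: factors_def iF_def iF_ww_def)

lemma factor_length:
  assumes sn: "seq_len s = omega_pow n" and r: "r \<in> factors (s :: ('q::preorder) tseq)"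
  obtains h where "h < n" "seq_len r = omega_pow h"
proof -
  have "valid_seq r" "indecomposable r" "olt (seq_len r) (seq_len s)"
    using r by (auto simp: factors_def iF_def)
  then obtain h where "seq_len r = omega_pow h" using indecomposable_length by blast
  with \<open>olt (seq_len r) (seq_len s)\<close> sn olt_omega_pow_iff that show ?thesis by simp
qed

lemma factor_range:
  assumes "seq_len s = omega_pow n" "seq_len r = omega_pow h" "r \<in> factors s"
  shows "digit_labels r ` positions h \<subseteq> digit_labels s ` positions n"
  using assms seq_range_eq[of s n] seq_range_eq[of r h] by (simp add: factors_def iF_def)

lemma factor_lomega_embeds:
  assumes sn: "seq_len s = omega_pow n" and r: "r \<in> factors (s :: ('q::preorder) tseq)"
  shows "embeds (lomega (seq_lset r)) (seq_lset s)"
proof -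
  obtain h where "seq_len r = omega_pow h" using factor_length[OF sn r] .
  then show ?thesis using emb_omega_concat_iff[of r h s n] sn r by (simp add: factors_def)
qed

lemma factor_of_candidate:
  assumes sn: "seq_len s = omega_pow n" and fin: "finite (seq_range s)"
    and P: "factor_candidate n (digit_labels s) P"
  shows "seq_of_digits (fst P) (snd P) \<in> factors (s :: ('q::preorder) tseq)"
proof -
  define t where "t = seq_of_digits (fst P) (snd P)"
  have t: "seq_len t = omega_pow (fst P)" by (simp add: t_def)
  have P': "fst P < n" "lindec (omega_seq (fst P) (snd P))"
    "snd P ` positions (fst P) \<subseteq> digit_labels s ` positions n"
    "embeds (lomega (omega_seq (fst P) (snd P))) (seq_lset s)"
    using P sn by (simp_all add: factor_candidate_def piece_seq_def)
  have "seq_range t = digit_labels t ` positions (fst P)" using seq_range_eq[OF t] .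
  also have "\<dots> = snd P ` positions (fst P)"
    by (rule image_cong) (simp_all add: t_def digit_labels_seq_of_digits)
  finally have sub: "seq_range t \<subseteq> seq_range s" using P'(3) seq_range_eq[OF sn] by simp
  have "valid_seq t" by (simp add: valid_seq_def t_def omega_pow_def is_ord_def)
  moreover have "olt (seq_len t) (seq_len s)" using P'(1) sn t olt_omega_pow_iff by simp
  moreover have "finite (seq_range t)" using finite_subset[OF sub fin] .
  moreover have "indecomposable t"
    using indecomposable_iff_lindec[OF t] lindec_seq_lset_seq_of_digits[OF P'(2)]
    by (simp add: t_def)
  moreover have "emb (omega_concat t) s"
  proof -
    have "embeds (lomega (seq_lset t)) (lomega (omega_seq (fst P) (snd P)))"
      using lomega_mono lequiv_seq_lset_seq_of_digits unfolding t_def by blast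
    thus ?thesis using emb_omega_concat_iff[OF t sn] P'(4) embeds_trans by blast
  qed
  ultimately have "t \<in> factors s" using sub by (simp add: factors_def iF_def)
  thus ?thesis by (simp add: t_def)
qed

lemma factor_cover:
  assumes s: "s \<in> iF_ww" and sn: "seq_len s = omega_pow (Suc k)"
  obtains W where "W \<noteq> []" "\<And>P. P \<in> set W \<Longrightarrow> seq_of_digits (fst P) (snd P) \<in> factors s"
    "embeds (seq_lset s) (lomega (lconcat (map piece_seq W)))"
proof -
  have fin: "finite (seq_range s)" and "indecomposable s" using s by (simp_all add: iF_ww_def)
  then have "has_factor_cover (Suc k) (digit_labels s)"
    using has_factor_cover_if_lindec seq_range_eq[OF sn] indecomposable_iff_lindec[OF sn] sn by simp
  then obtain W where W: "\<And>P. P \<in> set W \<Longrightarrow> factor_candidate (Suc k) (digit_labels s) P"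
    "embeds (seq_lset s) (lomega (lconcat (map piece_seq W)))"
    unfolding has_factor_cover_def using sn by auto
  moreover have "W \<noteq> []"
    using embeds_lomega_lconcat_Nil[OF W(2)] omega_seq_nonempty sn by auto
  ultimately show ?thesis using that factor_of_candidate[OF sn fin] by blast
qed

text \<open>Factors represented by equivalent trees are equivalent, and the trees come from the
  finite set of trees of height at most n over the finite range of s.\<close>

theorem finite_mod_equiv_factors:
  assumes s: "s \<in> iF_ww" and sn: "seq_len s = omega_pow n"
  shows "finite_mod_equiv (factors (s :: ('q::preorder) tseq))"
proof -
  let ?R = "digit_labels s ` positions n"
  have finR: "finite ?R" using s seq_range_eq[OF sn] by (simp add: iF_ww_def)
  have tree: "\<exists>t\<in>trees_upto ?R n. lequiv (seq_lset r) (tree_lset t)" if r: "r \<in> factors s" for r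
  proof -
    obtain h where h: "h < n" "seq_len r = omega_pow h" using factor_length[OF sn r] .
    have range: "digit_labels r ` positions h \<subseteq> ?R" using factor_range[OF sn h(2) r] .
    have "lindec (seq_lset r)"
      using factor_in_iF_ww[OF r] indecomposable_iff_lindec[OF h(2)] by (simp add: iF_ww_def)
    then have "has_tree_repr h (digit_labels r)"
      using has_tree_repr_if_lindec[OF finite_subset[OF range finR]] h(2) by simp
    then show ?thesis using trees_upto_mono[OF range, of h n] h unfolding has_tree_repr_def by auto
  qed
  obtain W where W: "set W \<subseteq> factors s"
    "\<And>r. r \<in> factors s \<Longrightarrow> \<exists>r'\<in>set W. lequiv (seq_lset r) (seq_lset r')"
    using finite_lequiv_cover[where A = "factors s" and \<phi> = seq_lset,
        OF finite_trees_upto[OF finR] tree]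
    by blast
  have "seq_equiv r r'"
    if "r \<in> factors s" "r' \<in> factors s" "lequiv (seq_lset r) (seq_lset r')" for r r'
  proof -
    obtain h h' where "seq_len r = omega_pow h" "seq_len r' = omega_pow h'"
      using factor_length[OF sn \<open>r \<in> factors s\<close>] factor_length[OF sn \<open>r' \<in> factors s\<close>] by metis
    then show ?thesis using that(3) emb_iff_embeds unfolding seq_equiv_def by metis
  qed
  then show ?thesis unfolding finite_mod_equiv_def using W by (intro exI[of _ "set W"]) blast
qed

lemma factors_nonempty:
  assumes "s \<in> iF_ww" "seq_len s = omega_pow (Suc k)"
  shows "factors s \<noteq> {}"
proof -
  obtain W where "W \<noteq> []" "\<And>P. P \<in> set W \<Longrightarrow> seq_of_digits (fst P) (snd P) \<in> factors s"
    using factor_cover[OF assms] by metis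
  then show ?thesis by (metis empty_iff list.set_sel(1))
qed

text \<open>A covering family of minimal cardinality contains no two equivalent members.\<close>

lemma finite_mod_equiv_irredundant:
  assumes "finite_mod_equiv (A :: ('q::preorder) tseq set)"
  obtains F where "finite F" "F \<subseteq> A" "\<forall>t\<in>A. \<exists>r\<in>F. seq_equiv t r"
    "\<And>r r'. r \<in> F \<Longrightarrow> r' \<in> F \<Longrightarrow> seq_equiv r r' \<Longrightarrow> r = r'"
proof -
  define S where "S = {F. finite F \<and> F \<subseteq> A \<and> (\<forall>t\<in>A. \<exists>r\<in>F. seq_equiv t r)}"
  obtain F0 where "F0 \<in> S" using assms unfolding finite_mod_equiv_def S_def by blast
  obtain F where F: "F \<in> S" and min: "\<And>F'. F' \<in> S \<Longrightarrow> card F \<le> card F'"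
    using ex_has_least_nat[of "\<lambda>F. F \<in> S" F0 card] \<open>F0 \<in> S\<close> by blast
  have "r = r'" if r: "r \<in> F" and r': "r' \<in> F" and e: "seq_equiv r r'" for r r'
  proof (rule ccontr)
    assume ne: "r \<noteq> r'"
    have "F - {r'} \<in> S"
      unfolding S_def
    proof (intro CollectI conjI ballI)
      show "finite (F - {r'})" "F - {r'} \<subseteq> A" using F by (auto simp: S_def)
      fix t assume "t \<in> A"
      then obtain x where x: "x \<in> F" "seq_equiv t x" using F by (auto simp: S_def)
      show "\<exists>x\<in>F - {r'}. seq_equiv t x"
      proof (cases "x = r'")
        case True
        then have "seq_equiv t r" using x(2) seq_equiv_sym[OF e] seq_equiv_trans by blast
        then show ?thesis using r ne by blast
      qed (use x in blast)
    qed
    then have "card F \<le> card (F - {r'})" by (rule min)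
    moreover have "card (F - {r'}) < card F" using F r'
      by (intro card_Diff1_less) (auto simp: S_def)
    ultimately show False by simp
  qed
  then show ?thesis using that F unfolding S_def by blast
qed

theorem is_g_exists:
  "s \<in> iF_ww \<Longrightarrow> seq_len s = omega_pow n \<Longrightarrow> \<exists>t. is_g s t \<and> tree_wf (t :: ('q::preorder) ftree)"
proof (induct n arbitrary: s rule: less_induct)
  case (less n)
  show ?case
  proof (cases n)
    case 0
    then have "is_g s (Leaf (seq_at s []))" using less.prems by (simp add: is_g.intros)
    thus ?thesis by (blast intro: tree_wf.intros)
  next
    case (Suc k)
    obtain F where F: "finite F" "F \<subseteq> factors s" "\<forall>t\<in>factors s. \<exists>r\<in>F. seq_equiv t r"
      "\<And>r r'. r \<in> F \<Longrightarrow> r' \<in> F \<Longrightarrow> seq_equiv r r' \<Longrightarrow> r = r'"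
      using finite_mod_equiv_irredundant[OF finite_mod_equiv_factors[OF less.prems]] by blast
    have "\<exists>t. is_g r t \<and> tree_wf t" if rF: "r \<in> F" for r
    proof -
      have r: "r \<in> factors s" using F(2) rF by blast
      obtain h where "h < n" "seq_len r = omega_pow h" using factor_length[OF less.prems(2) r] .
      then show ?thesis using less.hyps factor_in_iF_ww[OF r] by blast
    qed
    then obtain g where g: "\<And>r. r \<in> F \<Longrightarrow> is_g r (g r) \<and> tree_wf (g r)"
      by metis
    have fF: "fset (Abs_fset F) = F" using F(1) by (simp add: Abs_fset_inverse)
    have "is_g s (Node (g |`| Abs_fset F))"
    proof (rule is_g.intros(2)[of s n])
      show "seq_len s = omega_pow n" "0 < n" using less.prems Suc by simp_all
      show "\<forall>t\<in>factors s. \<exists>r. r |\<in>| Abs_fset F \<and> seq_equiv t r"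
        using F(3) fF by metis
    qed (use F g fF in simp_all)
    moreover have "F \<noteq> {}" using factors_nonempty[OF less.prems[unfolded Suc]] F(3) by blast
    then have "tree_wf (Node (g |`| Abs_fset F))" using g fF by (auto intro!: tree_wf.intros)
    ultimately show ?thesis by blast
  qed
qed

lemma piece_seq_embeds_if_equiv:
  assumes "seq_equiv (seq_of_digits (fst P) (snd P)) r" and "seq_len r = omega_pow h"
  shows "embeds (piece_seq P) (seq_lset (r :: ('q::preorder) tseq))"
proof -
  have "embeds (seq_lset (seq_of_digits (fst P) (snd P))) (seq_lset r)"
    using assms emb_iff_embeds[OF seq_len_seq_of_digits] unfolding seq_equiv_def by blast
  then show ?thesis
    using lequiv_seq_lset_seq_of_digits embeds_trans unfolding piece_seq_def by blast
qed

text \<open>The factors cover s cofinally, and each factor's omega-power embeds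
  into s, so s is equivalent to the node of the trees of the representatives.\<close>

lemma lequiv_Node_factors:
  assumes s: "s \<in> iF_ww" and sn: "seq_len s = omega_pow (Suc k)"
    and cov: "\<And>t. t \<in> factors s \<Longrightarrow> \<exists>r. r |\<in>| F \<and> seq_equiv t r"
    and F: "\<And>r. r |\<in>| F \<Longrightarrow> r \<in> factors s \<and> lequiv (seq_lset r) (tree_lset (h r)) \<and> tree_wf (h r)"
  shows "lequiv (seq_lset s) (tree_lset (Node (h |`| F))) \<and> tree_wf (Node (h |`| F))"
proof
  have ind: "lindec (seq_lset s)"
    using indecomposable_iff_lindec[OF sn] s by (simp add: iF_ww_def)
  obtain W where W: "\<And>P. P \<in> set W \<Longrightarrow> seq_of_digits (fst P) (snd P) \<in> factors s"
    "embeds (seq_lset s) (lomega (lconcat (map piece_seq W)))"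
    using factor_cover[OF s sn] by metis
  show "lequiv (seq_lset s) (tree_lset (Node (h |`| F)))"
  proof (rule lequiv_Node[OF ind _ W(2)])
    show "replicate (Suc k) 0 \<in> fst (seq_lset s)" using sn by simp
    fix X assume "X \<in> set (map piece_seq W)"
    then obtain P where P: "P \<in> set W" "X = piece_seq P" by auto
    then obtain r where r: "r |\<in>| F" "seq_equiv (seq_of_digits (fst P) (snd P)) r"
      using W(1) cov by blast
    obtain hr where "seq_len r = omega_pow hr" using factor_length[OF sn] F[OF r(1)] by metis
    then have "embeds X (seq_lset r)" using piece_seq_embeds_if_equiv r(2) P(2) by blast
    then have "embeds X (tree_lset (h r))" using F[OF r(1)] embeds_trans by blast
    then show "\<exists>t. t |\<in>| h |`| F \<and> embeds X (tree_lset t)" using r(1) by blast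
  next
    fix t assume "t |\<in>| h |`| F"
    then obtain r where r: "r |\<in>| F" "t = h r" by blast
    then show "tree_wf t \<and> embeds (lomega (tree_lset t)) (seq_lset s)"
      using F[OF r(1)] factor_lomega_embeds[OF sn] lomega_mono embeds_trans by metis
  qed
  have "F \<noteq> {||}" using factors_nonempty[OF s sn] cov by fastforce
  then show "tree_wf (Node (h |`| F))" using F by (auto intro!: tree_wf.intros)
qed

theorem is_g_lequiv:
  assumes "is_g s T"
  shows "s \<in> iF_ww \<Longrightarrow> lequiv (seq_lset s) (tree_lset T) \<and> tree_wf (T :: ('q::preorder) ftree)"
  using assms
proof (induct rule: is_g.induct)
  case (g_one s)
  then show ?case by (auto intro!: embeds_subset tree_wf.intros simp: digit_labels_def)
next
  case (g_pow s n F h)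
  obtain k where k: "n = Suc k" using g_pow.hyps(2) by (cases n) auto
  show ?case
  proof (rule lequiv_Node_factors[OF g_pow.prems g_pow.hyps(1)[unfolded k]])
    show "\<exists>r. r |\<in>| F \<and> seq_equiv t r" if "t \<in> factors s" for t
      using g_pow.hyps(4) that by blast
    show "r \<in> factors s \<and> lequiv (seq_lset r) (tree_lset (h r)) \<and> tree_wf (h r)" if "r |\<in>| F" for r
      using g_pow.hyps(3,6) that factor_in_iF_ww by blast
  qed
qed

theorem proposition4p25:
  fixes IF :: "('q::preorder) tseq set"
  assumes "IF = iF_ww"
  shows "(\<forall>s\<in>IF. \<forall>n. 0 < n \<and> seq_len s = omega_pow n \<longrightarrow> finite_mod_equiv (factors s))
    \<and> (\<forall>s\<in>IF. \<exists>t. is_g s t \<and> tree_wf t)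
    \<and> (\<forall>s\<in>IF. \<forall>t\<in>IF. \<forall>gs gt. is_g s gs \<longrightarrow> is_g t gt \<longrightarrow> (emb s t \<longleftrightarrow> le_T gs gt))"
proof (intro conjI ballI allI impI)
  have omega_pow_length: "\<exists>n. seq_len s = omega_pow n" if "s \<in> IF" for s
    using indecomposable_length[of s] that assms by (auto simp: iF_ww_def)
  show "finite_mod_equiv (factors s)" if "s \<in> IF" "0 < n \<and> seq_len s = omega_pow n" for s n
    using finite_mod_equiv_factors that assms by blast
  show "\<exists>t. is_g s t \<and> tree_wf t" if "s \<in> IF" for s
    using is_g_exists omega_pow_length[OF that] that assms by blast
  fix s t gs gt assume s: "s \<in> IF" and t: "t \<in> IF" and gs: "is_g s gs" and gt: "is_g t gt"
  obtain n m where "seq_len s = omega_pow n" "seq_len t = omega_pow m"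
    using omega_pow_length s t by blast
  then have "emb s t \<longleftrightarrow> embeds (seq_lset s) (seq_lset t)"
    by (rule emb_iff_embeds)
  also have "\<dots> \<longleftrightarrow> embeds (tree_lset gs) (tree_lset gt)"
    using is_g_lequiv[OF gs] is_g_lequiv[OF gt] s t assms embeds_trans by metis
  also have "\<dots> \<longleftrightarrow> le_T gs gt"
    using le_T_iff_embeds is_g_lequiv[OF gs] is_g_lequiv[OF gt] s t assms by blast
  finally show "emb s t \<longleftrightarrow> le_T gs gt" .
qed

end
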